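(* Let $M$ be a compact, connected, oriented $7$-manifold with $b^1(M)=0$ admitting torsion-free $G_2$-structures, with moduli space $(\mathscr M,\mathscr G)$, affine coordinates $x^a$, potential $\mathscr F$ and Yukawa coupling $\Xi$ as in the context, and let $\overline\nabla$ be the pull-back by $q\circ\Phi:\mathscr M\to S^2_+(H^3)^*$ of the Levi-Civita connection of $g_{S^2_+}$, viewed as a connection on the trivial bundle $\mathscr M\times S^2(H^3)^*$. Then for all $a,b$, \[ \overline\nabla_{\partial_a}\frac{\partial}{\partial x^b}=\nabla^{\mathscr G}_{\partial_a}\frac{\partial}{\partial x^b}+2e^{-\mathscr F/3}\,\nabla^{\mathscr G}_a\Xi_{bkl}\,dx^kdx^l, \] where $\frac{\partial}{\partial x^b}$ on the left denotes $(q\circ\Phi)_*\partial_b=\frac{\partial(q\circ\Phi)}{\partial x^b}$, the vector $\nabla^{\mathscr G}_{\partial_a}\frac{\partial}{\partial x^b}\in T\mathscr M$ is regarded as an element of $S^2(H^3)^*$ via the differential of $q\circ\Phi$, $\nabla^{\mathscr G}$ is the Levi-Civita connection of $\mathscr G$, and $\nabla^{\mathscr G}_a\Xi_{bkl}$ are the components of $\nabla^{\mathscr G}\Xi$ in affine coordinates.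
   Context: $G_2$-structures: positive $3$-forms $\varphi$ with metric $g_\varphi=\langle\cdot,\cdot\rangle_\varphi$, volume form $\mu_\varphi$, $\Theta(\varphi)=*_\varphi\varphi$; torsion-free: $d\varphi=d\Theta(\varphi)=0$. $\mathscr D$: diffeomorphisms acting trivially on $H^3(M)$; $\mathscr M$: torsion-free $G_2$-structures modulo $\mathscr D$, a manifold of dimension $b^3(M)=n+1$ with $\varphi\mathscr D\mapsto[\varphi]\in H^3:=H^3(M;\mathbb R)$ a local diffeomorphism; affine coordinates $x^a$: $[\varphi]=x^au_a$ for a fixed basis $u_a$ of $H^3$, and $(x^a)$ are also used as linear coordinates on $H^3$. $\mathrm{Vol}(\varphi)=\int\mu_\varphi$, $\mathscr F=-3\log\mathrm{Vol}$, $\mathscr G=\mathscr F_{ab}dx^adx^b$ (equal to $\frac{1}{\mathrm{Vol}(\varphi)}\int\langle\eta,\eta'\rangle_\varphi\mu_\varphi$ on harmonic representatives). Yukawa coupling: $\Xi_{abc}=\frac12\mathscr F_{abc}$. $S^2_+(H^3)^*$: inner products $q=q_{kl}dx^kdx^l$ on $H^3$, with symmetric metric $g_{S^2_+}(\dot q,\dot q)=\frac14q^{kl}q^{rs}\dot q_{kr}\dot q_{sl}$. The map $q\circ\Phi$ sends $\varphi\mathscr D$ to the inner product on $H^3$ given by the $L^2(g_\varphi)$ inner product of harmonic representatives; in affine coordinates $q\circ\Phi(x)=e^{-\mathscr F/3}\mathscr G_{kl}dx^kdx^l$. (It is the composition of the map $\Phi$ to the period domain with the projection $q$ to $S^2_+(H^3)^*$.)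 *)

theory Defs
  imports "HOL-Analysis.Analysis"
begin

(* Affine coordinates x^a on H^3 = R^(n+1) are modelled by vectors x :: real^'n,
   the index type 'n (finite) having b^3(M) = n+1 elements.
   Elements of S^2(H^3)^* (symmetric bilinear forms q_kl dx^k dx^l) are modelled as
   matrices q :: real^'n^'n with q$k$l = q_kl. *)

definition dirderiv :: "('v::real_normed_vector \<Rightarrow> 'w::real_normed_vector) \<Rightarrow> 'v \<Rightarrow> 'v \<Rightarrow> 'w" where
  "dirderiv f p z = vector_derivative (\<lambda>t. f (p + t *\<^sub>R z)) (at 0)"

definition pd :: "'n::finite \<Rightarrow> (real^'n \<Rightarrow> 'w::real_normed_vector) \<Rightarrow> real^'n \<Rightarrow> 'w" where
  "pd a f x = dirderiv f x (axis a 1)"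

fun Ck_on :: "nat \<Rightarrow> (real^'n::finite) set \<Rightarrow> (real^'n \<Rightarrow> real) \<Rightarrow> bool" where
  "Ck_on 0 U f = continuous_on U f"
| "Ck_on (Suc k) U f = (continuous_on U f \<and> (\<forall>x\<in>U. f differentiable (at x))
      \<and> (\<forall>i. Ck_on k U (pd i f)))"

definition smooth_on :: "(real^'n::finite) set \<Rightarrow> (real^'n \<Rightarrow> real) \<Rightarrow> bool" where
  "smooth_on U f = (\<forall>k. Ck_on k U f)"

(* Christoffel map of a Riemannian metric g (g p u v = metric at p) on an open subset of
   an affine space modelled on the linear subspace V:  \<Gamma>_p(X,Y) \<in> V is determined by the
   Koszul formula  g_p(\<Gamma>_p(X,Y),Z) = 1/2 (D_X g(Y,Z) + D_Y g(X,Z) - D_Z g(X,Y)).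
   The Levi-Civita connection is then \<nabla>_X Y = DY(X) + \<Gamma>(X,Y). *)
definition christoffel :: "'v::real_normed_vector set \<Rightarrow> ('v \<Rightarrow> 'v \<Rightarrow> 'v \<Rightarrow> real)
      \<Rightarrow> 'v \<Rightarrow> 'v \<Rightarrow> 'v \<Rightarrow> 'v" where
  "christoffel V g p X Y = (THE w. w \<in> V \<and> (\<forall>Z\<in>V. g p w Z =
      (dirderiv (\<lambda>q. g q Y Z) p X + dirderiv (\<lambda>q. g q X Z) p Y - dirderiv (\<lambda>q. g q X Y) p Z) / 2))"

(* Pull-back by Q of the Levi-Civita connection of (V,g), applied in direction \<partial>_a
   to a section s of the pulled-back (trivial) bundle:
   (Q^* \<nabla>)_{\<partial>_a} s = \<partial>_a s + \<Gamma>_{Q(x)}(\<partial>_a Q, s). *)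
definition pullback_LC :: "'v::real_normed_vector set \<Rightarrow> ('v \<Rightarrow> 'v \<Rightarrow> 'v \<Rightarrow> real)
      \<Rightarrow> (real^'n::finite \<Rightarrow> 'v) \<Rightarrow> (real^'n \<Rightarrow> 'v) \<Rightarrow> 'n \<Rightarrow> real^'n \<Rightarrow> 'v" where
  "pullback_LC V g Q s a x = pd a s x + christoffel V g (Q x) (pd a Q x) (s x)"

definition Sym2 :: "(real^'n^'n::finite) set" where
  "Sym2 = {A. transpose A = A}"

definition gS2 :: "real^'n^'n::finite \<Rightarrow> real^'n^'n \<Rightarrow> real^'n^'n \<Rightarrow> real" where
  "gS2 q A B = (1/4) * (\<Sum>k\<in>UNIV. \<Sum>l\<in>UNIV. \<Sum>r\<in>UNIV. \<Sum>s\<in>UNIV.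
       matrix_inv q $ k $ l * matrix_inv q $ r $ s * A $ k $ r * B $ s $ l)"

definition potF :: "(real^'n::finite \<Rightarrow> real) \<Rightarrow> real^'n \<Rightarrow> real" where
  "potF Vol x = - 3 * ln (Vol x)"

definition Gmet :: "(real^'n::finite \<Rightarrow> real) \<Rightarrow> real^'n \<Rightarrow> real^'n \<Rightarrow> real^'n \<Rightarrow> real" where
  "Gmet F x u v = (\<Sum>k\<in>UNIV. \<Sum>l\<in>UNIV. pd k (pd l F) x * u $ k * v $ l)"

definition Yukawa :: "(real^'n::finite \<Rightarrow> real) \<Rightarrow> real^'n \<Rightarrow> 'n \<Rightarrow> 'n \<Rightarrow> 'n \<Rightarrow> real" where
  "Yukawa F x a b c = (1/2) * pd a (pd b (pd c F)) x"

definition nablaG :: "(real^'n::finite \<Rightarrow> real) \<Rightarrow> real^'n \<Rightarrow> 'n \<Rightarrow> 'n \<Rightarrow> real^'n" where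
  "nablaG F x a b = christoffel UNIV (Gmet F) x (axis a 1) (axis b 1)"

definition Yuk3 :: "(real^'n::finite \<Rightarrow> real) \<Rightarrow> real^'n \<Rightarrow> real^'n \<Rightarrow> real^'n \<Rightarrow> real^'n \<Rightarrow> real" where
  "Yuk3 F x u v w = (\<Sum>i\<in>UNIV. \<Sum>j\<in>UNIV. \<Sum>k\<in>UNIV. Yukawa F x i j k * u $ i * v $ j * w $ k)"

definition nablaG_Yukawa :: "(real^'n::finite \<Rightarrow> real) \<Rightarrow> real^'n \<Rightarrow> 'n \<Rightarrow> 'n \<Rightarrow> 'n \<Rightarrow> 'n \<Rightarrow> real" where
  "nablaG_Yukawa F x a b k l = pd a (\<lambda>y. Yukawa F y b k l) x
     - Yuk3 F x (nablaG F x a b) (axis k 1) (axis l 1)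
     - Yuk3 F x (axis b 1) (nablaG F x a k) (axis l 1)
     - Yuk3 F x (axis b 1) (axis k 1) (nablaG F x a l)"

definition qPhi :: "(real^'n::finite \<Rightarrow> real) \<Rightarrow> real^'n \<Rightarrow> real^'n^'n" where
  "qPhi F x = (\<chi> k l. exp (- F x / 3) * pd k (pd l F) x)"

end

theory Submission
  imports Defs
begin

(* In the affine coordinates, q o Phi = exp(-F/3) Hess F, so both sides of the identity are
   explicit in the derivatives of F up to order four at x.  The Levi-Civita connection of
   g_{S^2_+} has Christoffel map Gamma_q(X,Y) = -(X q^-1 Y + Y q^-1 X)/2, and the Levi-Civita
   connection of the Hessian metric G is nabla_a d_b = K F_{ab.}/2 with K = (Hess F)^-1.
   Expanding, both sides become
     exp(-F/3) (F_{ab..} - F_{ab} Hess F / 3 - (F_{a..} K F_{b..} + F_{b..} K F_{a..}) / 2).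
   On the left the terms involving dF in the second derivative of q o Phi cancel against
   those of the Christoffel term; on the right they cancel because the homogeneity of Vol
   gives the Euler relations x^m F_m = -7, x^m F_{am} = -F_a and x^m F_{abm} = -2 F_{ab},
   so that K dF = -x.  Smoothness of F is used through the symmetry of its mixed partial
   derivatives. *)

section \<open>Partial derivatives\<close>

lemma dirderiv_eq_derivative:
  fixes f :: "'v::real_normed_vector \<Rightarrow> 'w::real_normed_vector"
  assumes "(f has_derivative f') (at p)"
  shows "dirderiv f p v = f' v"
proof -
  have "((\<lambda>t. p + t *\<^sub>R v) has_derivative (\<lambda>t. t *\<^sub>R v)) (at 0)"
    by (auto intro!: derivative_eq_intros)
  moreover have "(f has_derivative f') (at (p + 0 *\<^sub>R v))"
    using assms by simp
  ultimately have "((\<lambda>t. f (p + t *\<^sub>R v)) has_derivative (\<lambda>t. f' (t *\<^sub>R v))) (at 0)"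
    by (rule diff_chain_at[unfolded o_def])
  then have "((\<lambda>t. f (p + t *\<^sub>R v)) has_derivative (\<lambda>t. t *\<^sub>R f' v)) (at 0)"
    using has_derivative_linear[OF assms] by (simp add: linear_scale)
  then show ?thesis
    unfolding dirderiv_def by (intro vector_derivative_at) (simp add: has_vector_derivative_def)
qed

lemma pd_eq_derivative:
  assumes "(f has_derivative f') (at p)"
  shows "pd i f p = f' (axis i 1)"
  unfolding pd_def using dirderiv_eq_derivative[OF assms] .

lemma dirderiv_eq_sum_pd:
  fixes f :: "real^'n::finite \<Rightarrow> 'w::real_normed_vector"
  assumes "f differentiable (at p)"
  shows "dirderiv f p v = (\<Sum>i\<in>UNIV. v$i *\<^sub>R pd i f p)"
proof -
  obtain f' where f': "(f has_derivative f') (at p)"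
    using assms differentiable_def by blast
  have "f' v = f' (\<Sum>i\<in>UNIV. v$i *\<^sub>R axis i 1)"
    using basis_expansion[of v] by (simp add: scalar_mult_eq_scaleR)
  also have "\<dots> = (\<Sum>i\<in>UNIV. v$i *\<^sub>R f' (axis i 1))"
    using has_derivative_linear[OF f'] by (simp add: linear_sum linear_scale)
  finally show ?thesis
    using dirderiv_eq_derivative[OF f'] pd_eq_derivative[OF f'] by simp
qed

lemma pd_cong_open:
  assumes "open U" "p \<in> U" "\<And>z. z \<in> U \<Longrightarrow> f z = g z"
  shows "pd i f p = pd i g p"
proof -
  have "((\<lambda>t. p + t *\<^sub>R axis i 1) \<longlongrightarrow> p) (nhds 0)"
    by (auto intro!: tendsto_eq_intros filterlim_ident)
  then have "\<forall>\<^sub>F t in nhds 0. p + t *\<^sub>R axis i 1 \<in> U"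
    using assms(1,2) by (rule topological_tendstoD)
  then have "\<forall>\<^sub>F t in nhds 0. f (p + t *\<^sub>R axis i 1) = g (p + t *\<^sub>R axis i 1)"
    by eventually_elim (use assms(3) in auto)
  then show ?thesis
    unfolding pd_def dirderiv_def by (intro vector_derivative_cong_eq) (auto elim: eventually_mono)
qed

lemma pd_const: "pd i (\<lambda>z. c) p = 0"
  using pd_eq_derivative[OF has_derivative_const] .

lemma pd_add:
  assumes "f differentiable (at p)" "g differentiable (at p)"
  shows "pd i (\<lambda>z. f z + g z) p = pd i f p + pd i g p"
proof -
  obtain f' g' where "(f has_derivative f') (at p)" "(g has_derivative g') (at p)"
    using assms differentiable_def by blast
  with pd_eq_derivative[OF has_derivative_add[OF this]] show ?thesis
    by (simp add: pd_eq_derivative)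
qed

lemma pd_mult:
  fixes f g :: "real^'n::finite \<Rightarrow> real"
  assumes "f differentiable (at p)" "g differentiable (at p)"
  shows "pd i (\<lambda>z. f z * g z) p = pd i f p * g p + f p * pd i g p"
proof -
  obtain f' g' where "(f has_derivative f') (at p)" "(g has_derivative g') (at p)"
    using assms differentiable_def by blast
  with pd_eq_derivative[OF has_derivative_mult[OF this]] show ?thesis
    by (simp add: pd_eq_derivative)
qed

lemma pd_cmult:
  fixes f :: "real^'n::finite \<Rightarrow> real"
  assumes "f differentiable (at p)"
  shows "pd i (\<lambda>z. c * f z) p = c * pd i f p"
  using pd_mult[OF differentiable_const assms] by (simp add: pd_const)

lemma pd_sum:
  fixes f :: "'k \<Rightarrow> real^'n::finite \<Rightarrow> real"
  assumes "finite S" "\<And>m. m \<in> S \<Longrightarrow> f m differentiable (at p)"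
  shows "pd i (\<lambda>z. \<Sum>m\<in>S. f m z) p = (\<Sum>m\<in>S. pd i (f m) p)"
proof -
  have f': "(f m has_derivative frechet_derivative (f m) (at p)) (at p)" if "m \<in> S" for m
    using assms(2)[OF that] frechet_derivative_works by blast
  show ?thesis
    using pd_eq_derivative[OF has_derivative_sum[OF f']] pd_eq_derivative[OF f'] by simp
qed

lemma sum_axis_mult: "(\<Sum>i\<in>UNIV. axis k (1::real) $ i * f i) = f k"
proof -
  have "(\<Sum>i\<in>UNIV. axis k (1::real) $ i * f i) = (\<Sum>i\<in>UNIV. if k = i then f i else 0)"
    by (intro sum.cong) (auto simp: axis_def)
  then show ?thesis by simp
qed

lemma pd_component: "pd i (\<lambda>z. z $ m) p = axis i 1 $ m"
  by (rule pd_eq_derivative[OF bounded_linear_imp_has_derivative[OF bounded_linear_vec_nth]])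

lemma pd_compose_real:
  fixes f :: "real^'n::finite \<Rightarrow> real"
  assumes "f differentiable (at p)" "(h has_real_derivative h') (at (f p))"
  shows "pd i (\<lambda>z. h (f z)) p = h' * pd i f p"
proof -
  obtain f' where f': "(f has_derivative f') (at p)"
    using assms differentiable_def by blast
  have "(h has_derivative (\<lambda>t. h' * t)) (at (f p))"
    using assms(2) by (simp add: has_field_derivative_def)
  from pd_eq_derivative[OF diff_chain_at[OF f' this, unfolded o_def]] show ?thesis
    by (simp add: pd_eq_derivative[OF f'])
qed

lemma pd_exp_third:
  fixes f :: "real^'n::finite \<Rightarrow> real"
  assumes "f differentiable (at p)"
  shows "pd i (\<lambda>z. exp (- f z / 3)) p = - exp (- f p / 3) * pd i f p / 3"
proof -
  have "((\<lambda>u. exp (- u / 3)) has_real_derivative - exp (- f p / 3) / 3) (at (f p))"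
    by (auto intro!: derivative_eq_intros)
  from pd_compose_real[OF assms this] show ?thesis by simp
qed

lemma has_derivative_vec_lambda:
  fixes f :: "'i::finite \<Rightarrow> 'a::euclidean_space \<Rightarrow> 'b::real_normed_vector"
  assumes "\<And>i. (f i has_derivative f' i) (at p)"
  shows "((\<lambda>z. \<chi> i. f i z) has_derivative (\<lambda>h. \<chi> i. f' i h)) (at p)"
proof -
  have lin: "linear (f' i)" for i
    using assms has_derivative_linear by blast
  have "linear (\<lambda>h. \<chi> i. f' i h)"
    by (intro linearI) (simp_all add: vec_eq_iff linear_add[OF lin] linear_scale[OF lin])
  moreover have "((\<lambda>z. \<chi> i. (1 / norm (z - p)) *\<^sub>R (f i z - (f i p + f' i (z - p))))
      \<longlongrightarrow> (\<chi> i. 0)) (at p)"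
    using assms by (intro tendsto_vec_lambda) (simp add: has_derivative_within)
  moreover have "(\<lambda>z. \<chi> i. (1 / norm (z - p)) *\<^sub>R (f i z - (f i p + f' i (z - p))))
      = (\<lambda>z. (1 / norm (z - p)) *\<^sub>R ((\<chi> i. f i z) - ((\<chi> i. f i p) + (\<chi> i. f' i (z - p)))))"
    by (simp add: vec_eq_iff fun_eq_iff)
  ultimately show ?thesis
    by (simp add: has_derivative_within linear_conv_bounded_linear vec_eq_iff zero_vec_def)
qed

lemma differentiable_vec_lambda:
  fixes f :: "'i::finite \<Rightarrow> 'a::euclidean_space \<Rightarrow> 'b::real_normed_vector"
  assumes "\<And>i. f i differentiable (at p)"
  shows "(\<lambda>z. \<chi> i. f i z) differentiable (at p)"
  using has_derivative_vec_lambda assms unfolding differentiable_def by metis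

lemma pd_vec_lambda:
  fixes f :: "'i::finite \<Rightarrow> real^'n::finite \<Rightarrow> 'b::real_normed_vector"
  assumes "\<And>k. f k differentiable (at p)"
  shows "pd i (\<lambda>z. \<chi> k. f k z) p = (\<chi> k. pd i (f k) p)"
proof -
  have f': "(f k has_derivative frechet_derivative (f k) (at p)) (at p)" for k
    using assms frechet_derivative_works by blast
  show ?thesis
    using pd_eq_derivative[OF has_derivative_vec_lambda[OF f']] pd_eq_derivative[OF f'] by simp
qed

lemma pd_mat_lambda:
  fixes c :: "'i::finite \<Rightarrow> 'j::finite \<Rightarrow> real^'n::finite \<Rightarrow> real"
  assumes "\<And>k l. c k l differentiable (at p)"
  shows "pd i (\<lambda>z. \<chi> k l. c k l z) p = (\<chi> k l. pd i (c k l) p)"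
  using assms by (simp add: pd_vec_lambda differentiable_vec_lambda)

section \<open>Smooth functions\<close>

lemma Ck_on_Suc_imp: "Ck_on (Suc k) U f \<Longrightarrow> Ck_on k U f"
  by (induction k arbitrary: f) auto

lemma Ck_on_imp_continuous_on: "Ck_on k U f \<Longrightarrow> continuous_on U f"
  by (cases k) auto

lemma Ck_on_SucI:
  assumes "continuous_on U f" "\<And>z. z \<in> U \<Longrightarrow> f differentiable (at z)" "\<And>i. Ck_on k U (pd i f)"
  shows "Ck_on (Suc k) U f"
  using assms by simp

lemma Ck_on_Suc_imp_differentiable: "Ck_on (Suc k) U f \<Longrightarrow> z \<in> U \<Longrightarrow> f differentiable (at z)"
  by simp

lemma Ck_on_Suc_imp_pd: "Ck_on (Suc k) U f \<Longrightarrow> Ck_on k U (pd i f)"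
  by simp

lemma Ck_on_cong:
  assumes "open U" "\<And>z. z \<in> U \<Longrightarrow> f z = g z" "Ck_on k U f"
  shows "Ck_on k U g"
  using assms(2,3)
proof (induction k arbitrary: f g)
  case 0
  then show ?case by (metis Ck_on.simps(1) continuous_on_eq)
next
  case (Suc k)
  note eq = Suc.prems(1) and f = Suc.prems(2)[unfolded Ck_on.simps]
  have "g differentiable (at z)" if "z \<in> U" for z
  proof -
    have "f differentiable (at z)"
      using f that by blast
    then obtain f' where "(f has_derivative f') (at z)"
      unfolding differentiable_def by blast
    then have "(g has_derivative f') (at z)"
      using eq by (rule has_derivative_transform_within_open[OF _ assms(1) that])
    then show ?thesis using differentiable_def by blast
  qed
  moreover have "Ck_on k U (pd i g)" for i
  proof (rule Suc.IH)
    show "pd i f z = pd i g z" if "z \<in> U" for z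
      using pd_cong_open[OF assms(1) that eq] .
    show "Ck_on k U (pd i f)" using f by blast
  qed
  moreover have "continuous_on U g"
    using f eq continuous_on_eq[of U f g] by blast
  ultimately show ?case by simp
qed

lemma Ck_on_const: "Ck_on k U (\<lambda>z. c)"
proof (induction k arbitrary: c)
  case (Suc k)
  show ?case
    by (rule Ck_on_SucI) (simp_all add: pd_const[abs_def] Suc)
qed simp

lemma Ck_on_add:
  assumes "open U"
  shows "Ck_on k U f \<Longrightarrow> Ck_on k U g \<Longrightarrow> Ck_on k U (\<lambda>z. f z + g z)"
proof (induction k arbitrary: f g)
  case 0
  then show ?case by (simp add: continuous_on_add)
next
  case (Suc k)
  note f = Suc.prems(1) and g = Suc.prems(2)
  show ?case
  proof (rule Ck_on_SucI)
    show "continuous_on U (\<lambda>z. f z + g z)"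
      using f g by (intro continuous_on_add Ck_on_imp_continuous_on)
    show "(\<lambda>z. f z + g z) differentiable (at z)" if "z \<in> U" for z
      using f g that by (intro differentiable_add Ck_on_Suc_imp_differentiable)
    show "Ck_on k U (pd i (\<lambda>z. f z + g z))" for i
    proof (rule Ck_on_cong[OF assms _ Suc.IH[OF Ck_on_Suc_imp_pd[OF f] Ck_on_Suc_imp_pd[OF g]]])
      show "pd i f z + pd i g z = pd i (\<lambda>z. f z + g z) z" if "z \<in> U" for z
        using f g that by (intro pd_add[symmetric] Ck_on_Suc_imp_differentiable)
    qed
  qed
qed

lemma Ck_on_mult:
  assumes "open U"
  shows "Ck_on k U f \<Longrightarrow> Ck_on k U g \<Longrightarrow> Ck_on k U (\<lambda>z. f z * g z)"
proof (induction k arbitrary: f g)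
  case 0
  then show ?case by (simp add: continuous_on_mult)
next
  case (Suc k)
  note f = Suc.prems(1) and g = Suc.prems(2)
  show ?case
  proof (rule Ck_on_SucI)
    show "continuous_on U (\<lambda>z. f z * g z)"
      using f g by (intro continuous_on_mult Ck_on_imp_continuous_on)
    show "(\<lambda>z. f z * g z) differentiable (at z)" if "z \<in> U" for z
      using f g that by (intro differentiable_mult Ck_on_Suc_imp_differentiable)
    show "Ck_on k U (pd i (\<lambda>z. f z * g z))" for i
    proof (rule Ck_on_cong[OF assms])
      show "Ck_on k U (\<lambda>z. pd i f z * g z + f z * pd i g z)"
        using Ck_on_Suc_imp_pd[OF f] Ck_on_Suc_imp[OF f] Ck_on_Suc_imp_pd[OF g] Ck_on_Suc_imp[OF g]
        by (intro Ck_on_add[OF assms] Suc.IH)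
      show "pd i f z * g z + f z * pd i g z = pd i (\<lambda>z. f z * g z) z" if "z \<in> U" for z
        using f g that by (intro pd_mult[symmetric] Ck_on_Suc_imp_differentiable)
    qed
  qed
qed

lemma Ck_on_Suc_compose:
  assumes "open U" and f: "Ck_on (Suc k) U f"
    and h: "\<And>z. z \<in> U \<Longrightarrow> (h has_real_derivative h' (f z)) (at (f z))"
    and h': "Ck_on k U (\<lambda>z. h' (f z))"
  shows "Ck_on (Suc k) U (\<lambda>z. h (f z))"
proof -
  have diff: "(\<lambda>z. h (f z)) differentiable (at z)" if "z \<in> U" for z
  proof -
    have "h differentiable (at (f z))"
      using h[OF that] real_differentiable_def differentiableI by blast
    with f that show ?thesis
      using differentiable_chain_at[of f z h] by (simp add: o_def)
  qed
  have "Ck_on k U (pd i (\<lambda>z. h (f z)))" for i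
  proof (rule Ck_on_cong[OF assms(1)])
    show "Ck_on k U (\<lambda>z. h' (f z) * pd i f z)"
      using f by (intro Ck_on_mult[OF assms(1) h']) simp
    show "h' (f z) * pd i f z = pd i (\<lambda>z. h (f z)) z" if "z \<in> U" for z
      using f h[OF that] that by (simp add: pd_compose_real)
  qed
  moreover have "continuous_on U (\<lambda>z. h (f z))"
    using diff by (meson continuous_at_imp_continuous_on differentiable_imp_continuous_within)
  ultimately show ?thesis using diff by simp
qed

lemma Ck_on_exp:
  assumes "open U"
  shows "Ck_on k U f \<Longrightarrow> Ck_on k U (\<lambda>z. exp (f z))"
proof (induction k arbitrary: f)
  case 0
  then show ?case by (simp add: continuous_on_exp)
next
  case (Suc k)
  show ?case
  proof (rule Ck_on_Suc_compose[OF assms Suc.prems])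
    show "(exp has_real_derivative exp (f z)) (at (f z))" for z
      by (rule DERIV_exp)
    show "Ck_on k U (\<lambda>z. exp (f z))"
      using Suc.IH[OF Ck_on_Suc_imp[OF Suc.prems]] .
  qed
qed

lemma Ck_on_inverse:
  assumes "open U" "\<And>z. z \<in> U \<Longrightarrow> f z \<noteq> 0"
  shows "Ck_on k U f \<Longrightarrow> Ck_on k U (\<lambda>z. inverse (f z))"
proof (induction k)
  case 0
  then show ?case using assms(2) by (simp add: continuous_on_inverse)
next
  case (Suc k)
  show ?case
  proof (rule Ck_on_Suc_compose[OF assms(1) Suc.prems])
    show "(inverse has_real_derivative (- 1) * (inverse (f z) * inverse (f z))) (at (f z))"
      if "z \<in> U" for z
      using DERIV_inverse[OF assms(2)[OF that]] by (simp add: power2_eq_square)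
    show "Ck_on k U (\<lambda>z. (- 1) * (inverse (f z) * inverse (f z)))"
      using Suc.IH[OF Ck_on_Suc_imp[OF Suc.prems]]
      by (intro Ck_on_mult[OF assms(1)] Ck_on_const)
  qed
qed

lemma Ck_on_ln:
  assumes "open U" "\<And>z. z \<in> U \<Longrightarrow> f z > 0" "Ck_on k U f"
  shows "Ck_on k U (\<lambda>z. ln (f z))"
proof (cases k)
  case 0
  then show ?thesis
    using assms by (simp add: continuous_on_ln less_imp_neq[symmetric])
next
  case (Suc m)
  show ?thesis
    unfolding Suc
  proof (rule Ck_on_Suc_compose[OF assms(1) assms(3)[unfolded Suc]])
    show "(ln has_real_derivative inverse (f z)) (at (f z))" if "z \<in> U" for z
      using DERIV_ln assms(2)[OF that] by blast
    show "Ck_on m U (\<lambda>z. inverse (f z))"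
      using assms(2,3) Ck_on_Suc_imp[of m U f] unfolding Suc
      by (intro Ck_on_inverse[OF assms(1)]) (simp_all add: less_imp_neq[symmetric])
  qed
qed

lemma smooth_on_imp_Ck_on: "smooth_on U f \<Longrightarrow> Ck_on k U f"
  unfolding smooth_on_def by blast

lemma smooth_on_imp_differentiable: "smooth_on U f \<Longrightarrow> z \<in> U \<Longrightarrow> f differentiable (at z)"
  using smooth_on_imp_Ck_on[of U f 1] by simp

lemma smooth_on_pd: "smooth_on U f \<Longrightarrow> smooth_on U (pd i f)"
  unfolding smooth_on_def by (metis Ck_on.simps(2))

lemma smooth_on_const: "smooth_on U (\<lambda>z. c)"
  unfolding smooth_on_def using Ck_on_const by blast

lemma smooth_on_mult: "open U \<Longrightarrow> smooth_on U f \<Longrightarrow> smooth_on U g \<Longrightarrow> smooth_on U (\<lambda>z. f z * g z)"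
  unfolding smooth_on_def using Ck_on_mult by blast

lemma smooth_on_exp: "open U \<Longrightarrow> smooth_on U f \<Longrightarrow> smooth_on U (\<lambda>z. exp (f z))"
  unfolding smooth_on_def using Ck_on_exp by blast

lemma smooth_on_ln:
  "open U \<Longrightarrow> (\<And>z. z \<in> U \<Longrightarrow> f z > 0) \<Longrightarrow> smooth_on U f \<Longrightarrow> smooth_on U (\<lambda>z. ln (f z))"
  unfolding smooth_on_def using Ck_on_ln by blast

lemma smooth_on_exp_third:
  assumes "open U" "smooth_on U f"
  shows "smooth_on U (\<lambda>z. exp (- f z / 3))"
proof -
  have "smooth_on U (\<lambda>z. exp ((- 1 / 3) * f z))"
    by (intro smooth_on_exp smooth_on_mult smooth_on_const assms)
  then show ?thesis by simp
qed

section \<open>Symmetry of second derivatives\<close>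

lemma has_real_derivative_pd_along_axis:
  fixes f :: "real^'n::finite \<Rightarrow> real"
  assumes "f differentiable (at (p + s *\<^sub>R axis i 1))"
  shows "((\<lambda>s. f (p + s *\<^sub>R axis i 1)) has_real_derivative pd i f (p + s *\<^sub>R axis i 1)) (at s)"
proof -
  obtain f' where f': "(f has_derivative f') (at (p + s *\<^sub>R axis i 1))"
    using assms differentiable_def by blast
  have "((\<lambda>s. p + s *\<^sub>R axis i 1) has_derivative (\<lambda>t. t *\<^sub>R axis i 1)) (at s)"
    by (auto intro!: derivative_eq_intros)
  from diff_chain_at[OF this f', unfolded o_def]
  have "((\<lambda>s. f (p + s *\<^sub>R axis i 1)) has_derivative (*) (f' (axis i 1))) (at s)"
    by (rule has_derivative_eq_rhs) (simp add: fun_eq_iff linear_scale[OF has_derivative_linear[OF f']])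
  then show ?thesis
    by (simp add: has_field_derivative_def pd_eq_derivative[OF f'])
qed

lemma second_difference_mean_value:
  fixes f :: "real^'n::finite \<Rightarrow> real" and x :: "real^'n" and i j :: 'n
  defines "P \<equiv> \<lambda>s t. x + s *\<^sub>R axis i 1 + t *\<^sub>R axis j 1"
  assumes C2: "Ck_on 2 U f" and "h > 0"
    and box: "\<And>s t. s \<in> {0..h} \<Longrightarrow> t \<in> {0..h} \<Longrightarrow> P s t \<in> U"
  obtains s t where "s \<in> {0<..<h}" "t \<in> {0<..<h}"
    "f (P h h) - f (P h 0) - f (P 0 h) + f (P 0 0) = h * h * pd j (pd i f) (P s t)"
proof -
  have C2': "Ck_on (Suc (Suc 0)) U f"
    using C2 by (simp add: numeral_2_eq_2)
  have df: "f differentiable (at (P s t))" and dfi: "pd i f differentiable (at (P s t))"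
    if "s \<in> {0..h}" "t \<in> {0..h}" for s t
    using box[OF that] Ck_on_Suc_imp_differentiable[OF Ck_on_Suc_imp[OF C2']]
      Ck_on_Suc_imp_differentiable[OF Ck_on_Suc_imp_pd[OF C2']] by blast+
  have along_s: "P s t = (x + t *\<^sub>R axis j 1) + s *\<^sub>R axis i 1" for s t
    unfolding P_def by (simp add: algebra_simps)
  have along_t: "P s t = (x + s *\<^sub>R axis i 1) + t *\<^sub>R axis j 1" for s t
    unfolding P_def by simp
  obtain s where s: "s \<in> {0<..<h}"
    and step_s: "(f (P h h) - f (P h 0)) - (f (P 0 h) - f (P 0 0))
      = h * (pd i f (P s h) - pd i f (P s 0))"
  proof -
    have "((\<lambda>s. f (P s h) - f (P s 0)) has_real_derivative pd i f (P s h) - pd i f (P s 0)) (at s)"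
      if "0 \<le> s" "s \<le> h" for s
      unfolding along_s
      by (intro DERIV_diff has_real_derivative_pd_along_axis df[of s, unfolded along_s])
        (use that \<open>h > 0\<close> in auto)
    from MVT2[OF \<open>h > 0\<close> this] that show ?thesis by auto
  qed
  obtain t where t: "t \<in> {0<..<h}"
    and step_t: "pd i f (P s h) - pd i f (P s 0) = h * pd j (pd i f) (P s t)"
  proof -
    have "((\<lambda>t. pd i f (P s t)) has_real_derivative pd j (pd i f) (P s t)) (at t)"
      if "0 \<le> t" "t \<le> h" for t
      unfolding along_t
      by (intro has_real_derivative_pd_along_axis dfi[of s t, unfolded along_t])
        (use that s in auto)
    from MVT2[OF \<open>h > 0\<close> this] that show ?thesis by auto
  qed
  have "f (P h h) - f (P h 0) - f (P 0 h) + f (P 0 0) = h * (h * pd j (pd i f) (P s t))"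
    using step_s unfolding step_t by simp
  with s t that show ?thesis by simp
qed

lemma mixed_partials_meet:
  fixes f :: "real^'n::finite \<Rightarrow> real"
  assumes C2: "Ck_on 2 U f" and "d > 0" and "ball x d \<subseteq> U"
  obtains p q where "dist p x < d" "dist q x < d" "pd j (pd i f) p = pd i (pd j f) q"
proof -
  define P where "P = (\<lambda>s t. x + s *\<^sub>R axis i 1 + t *\<^sub>R axis j 1)"
  define h where "h = d / 4"
  have "h > 0"
    using \<open>d > 0\<close> unfolding h_def by simp
  have near: "dist (P s t) x < d" if "s \<in> {0..h}" "t \<in> {0..h}" for s t
  proof -
    have "dist (P s t) x = norm (s *\<^sub>R axis i (1::real) + t *\<^sub>R axis j 1)"
      unfolding P_def dist_norm by (simp add: add.assoc)
    also have "\<dots> \<le> s + t"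
      using norm_triangle_ineq[of "s *\<^sub>R axis i (1::real)" "t *\<^sub>R axis j 1"] that by simp
    also have "\<dots> < d"
      using that \<open>h > 0\<close> unfolding h_def by simp
    finally show ?thesis .
  qed
  have box: "P s t \<in> U" and box': "P t s \<in> U" if "s \<in> {0..h}" "t \<in> {0..h}" for s t
    using near[OF that] near[OF that(2,1)] \<open>ball x d \<subseteq> U\<close> by (auto simp: dist_commute)
  have swap: "x + s *\<^sub>R axis j 1 + t *\<^sub>R axis i 1 = P t s" for s t
    unfolding P_def by (simp add: algebra_simps)
  obtain s t where st: "s \<in> {0<..<h}" "t \<in> {0<..<h}"
    and DA: "f (P h h) - f (P h 0) - f (P 0 h) + f (P 0 0) = h * h * pd j (pd i f) (P s t)"
    using second_difference_mean_value[OF C2 \<open>h > 0\<close>, of x i j] box unfolding P_def by blast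
  obtain s' t' where st': "s' \<in> {0<..<h}" "t' \<in> {0<..<h}"
    and DB: "f (P h h) - f (P 0 h) - f (P h 0) + f (P 0 0) = h * h * pd i (pd j f) (P t' s')"
    using second_difference_mean_value[OF C2 \<open>h > 0\<close>, of x j i] box' unfolding swap by blast
  have "h * h * pd j (pd i f) (P s t) = h * h * pd i (pd j f) (P t' s')"
    using DA DB by linarith
  then have "pd j (pd i f) (P s t) = pd i (pd j f) (P t' s')"
    using \<open>h > 0\<close> by simp
  moreover have "dist (P s t) x < d" "dist (P t' s') x < d"
    using near st st' by (simp_all add: less_eq_real_def)
  ultimately show ?thesis
    using that by blast
qed

lemma pd_commute:
  fixes f :: "real^'n::finite \<Rightarrow> real"
  assumes "open U" "x \<in> U" "Ck_on 2 U f"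
  shows "pd i (pd j f) x = pd j (pd i f) x"
proof (rule ccontr)
  define A where "A = pd j (pd i f)"
  define B where "B = pd i (pd j f)"
  define e where "e = \<bar>A x - B x\<bar> / 2"
  assume "pd i (pd j f) x \<noteq> pd j (pd i f) x"
  then have "e > 0"
    unfolding e_def A_def B_def by simp
  have C2: "Ck_on (Suc (Suc 0)) U f"
    using assms(3) by (simp add: numeral_2_eq_2)
  have "continuous_on U A" "continuous_on U B"
    unfolding A_def B_def
    using Ck_on_imp_continuous_on[OF Ck_on_Suc_imp_pd[OF Ck_on_Suc_imp_pd[OF C2]]] by blast+
  then have "isCont A x" "isCont B x"
    using assms(1,2) continuous_on_eq_continuous_at by blast+
  then obtain dA dB where "dA > 0" "dB > 0"
    and dA: "\<forall>y. dist y x < dA \<longrightarrow> dist (A y) (A x) < e"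
    and dB: "\<forall>y. dist y x < dB \<longrightarrow> dist (B y) (B x) < e"
    using \<open>e > 0\<close> unfolding continuous_at_eps_delta by blast
  obtain r where "r > 0" "ball x r \<subseteq> U"
    using assms(1,2) openE by blast
  moreover have "ball x (min r (min dA dB)) \<subseteq> ball x r"
    by auto
  ultimately obtain p q where "dist p x < min r (min dA dB)" "dist q x < min r (min dA dB)" "A p = B q"
    using mixed_partials_meet[OF assms(3), where d = "min r (min dA dB)" and x = x and i = i and j = j]
      \<open>dA > 0\<close> \<open>dB > 0\<close>
    unfolding A_def B_def by (metis min_less_iff_conj order_trans)
  then have "dist (A p) (A x) < e" "dist (A p) (B x) < e"
    using dA dB by auto
  then show False
    unfolding e_def dist_real_def by (simp add: abs_if split: if_splits)
qed

lemma smooth_on_pd_commute: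
  "open U \<Longrightarrow> x \<in> U \<Longrightarrow> smooth_on U f \<Longrightarrow> pd i (pd j f) x = pd j (pd i f) x"
  using pd_commute smooth_on_imp_Ck_on by blast

lemma smooth_on_pd_commute_inner:
  assumes "open U" "x \<in> U" "smooth_on U f"
  shows "pd i (pd j (pd k f)) x = pd i (pd k (pd j f)) x"
  using assms by (intro pd_cong_open[OF assms(1,2)] smooth_on_pd_commute) auto

lemma pd_pd_mult:
  fixes f g :: "real^'n::finite \<Rightarrow> real"
  assumes U: "open U" "x \<in> U" and f: "smooth_on U f" and g: "smooth_on U g"
  shows "pd a (pd b (\<lambda>z. f z * g z)) x
    = pd a (pd b f) x * g x + pd b f x * pd a g x + pd a f x * pd b g x + f x * pd a (pd b g) x"
proof -
  have "pd a (pd b (\<lambda>z. f z * g z)) x = pd a (\<lambda>z. pd b f z * g z + f z * pd b g z) x"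
    using f g by (intro pd_cong_open[OF U] pd_mult) (auto intro: smooth_on_imp_differentiable)
  also have "\<dots> = pd a (\<lambda>z. pd b f z * g z) x + pd a (\<lambda>z. f z * pd b g z) x"
    using f g U by (intro pd_add differentiable_mult smooth_on_imp_differentiable smooth_on_pd)
  also have "\<dots> = pd a (pd b f) x * g x + pd b f x * pd a g x + pd a f x * pd b g x + f x * pd a (pd b g) x"
    using smooth_on_imp_differentiable[OF f U(2)] smooth_on_imp_differentiable[OF g U(2)]
      smooth_on_imp_differentiable[OF smooth_on_pd[OF f] U(2)]
      smooth_on_imp_differentiable[OF smooth_on_pd[OF g] U(2)]
    by (simp add: pd_mult)
  finally show ?thesis .
qed

lemma pd_pd_exp_third:
  fixes f :: "real^'n::finite \<Rightarrow> real"
  assumes U: "open U" "x \<in> U" and f: "smooth_on U f"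
  shows "pd a (pd b (\<lambda>z. exp (- f z / 3))) x
    = exp (- f x / 3) * (pd a f x * pd b f x / 9 - pd a (pd b f) x / 3)"
proof -
  have df: "f differentiable (at x)" "pd b f differentiable (at x)"
    using smooth_on_imp_differentiable[OF f U(2)] smooth_on_imp_differentiable[OF smooth_on_pd[OF f] U(2)] .
  have de: "(\<lambda>z. exp (- f z / 3)) differentiable (at x)"
    using smooth_on_imp_differentiable[OF smooth_on_exp_third[OF U(1) f] U(2)] .
  have "pd a (pd b (\<lambda>z. exp (- f z / 3))) x = pd a (\<lambda>z. (- 1 / 3) * (exp (- f z / 3) * pd b f z)) x"
  proof (rule pd_cong_open[OF U])
    show "pd b (\<lambda>z. exp (- f z / 3)) z = (- 1 / 3) * (exp (- f z / 3) * pd b f z)" if "z \<in> U" for z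
      using pd_exp_third[OF smooth_on_imp_differentiable[OF f that]] by simp
  qed
  also have "\<dots> = (- 1 / 3) * pd a (\<lambda>z. exp (- f z / 3) * pd b f z) x"
    by (rule pd_cmult) (rule differentiable_mult[OF de df(2)])
  also have "\<dots> = (- 1 / 3) * (pd a (\<lambda>z. exp (- f z / 3)) x * pd b f x + exp (- f x / 3) * pd a (pd b f) x)"
    unfolding pd_mult[OF de df(2)] ..
  finally show ?thesis
    using pd_exp_third[OF df(1)] by (simp add: algebra_simps)
qed

lemma pd_pd_mat_lambda:
  fixes c :: "'i::finite \<Rightarrow> 'j::finite \<Rightarrow> real^'n::finite \<Rightarrow> real"
  assumes U: "open U" "x \<in> U" and c: "\<And>k l. smooth_on U (c k l)"
  shows "pd a (pd b (\<lambda>z. \<chi> k l. c k l z)) x = (\<chi> k l. pd a (pd b (c k l)) x)"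
proof -
  have "pd a (pd b (\<lambda>z. \<chi> k l. c k l z)) x = pd a (\<lambda>z. \<chi> k l. pd b (c k l) z) x"
    using c by (intro pd_cong_open[OF U] pd_mat_lambda smooth_on_imp_differentiable)
  also have "\<dots> = (\<chi> k l. pd a (pd b (c k l)) x)"
    using c U by (intro pd_mat_lambda smooth_on_imp_differentiable smooth_on_pd)
  finally show ?thesis .
qed

section \<open>Matrices\<close>

lemma matrix_add_rdistrib: "((A::'a::semiring_1^'n^'m) + B) ** C = A ** C + B ** C"
  by (vector matrix_matrix_mult_def sum.distrib[symmetric] field_simps)

lemma matrix_diff_ldistrib: "(A::'a::ring_1^'n^'m) ** (B - C) = A ** B - A ** C"
  by (vector matrix_matrix_mult_def sum_subtractf[symmetric] field_simps)

lemma matrix_diff_rdistrib: "((A::'a::ring_1^'n^'m) - B) ** C = A ** C - B ** C"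
  by (vector matrix_matrix_mult_def sum_subtractf[symmetric] field_simps)

lemma matrix_neg_left: "(- (A::'a::ring_1^'n^'m)) ** B = - (A ** B)"
  by (vector matrix_matrix_mult_def sum_negf[symmetric])

lemma matrix_neg_right: "(A::'a::ring_1^'n^'m) ** (- B) = - (A ** B)"
  by (vector matrix_matrix_mult_def sum_negf[symmetric])

lemma matrix_scaleR_left: "(c *\<^sub>R (A::real^'n^'m)) ** B = c *\<^sub>R (A ** B)"
  by (simp add: scalar_matrix_assoc)

lemma matrix_scaleR_right: "(A::real^'n^'m) ** (c *\<^sub>R B) = c *\<^sub>R (A ** B)"
  by (simp add: matrix_scalar_ac scalar_matrix_assoc)

lemma matrix_mult_shifted:
  fixes A B H K :: "real^'n^'n"
  assumes KH: "K ** H = mat 1" and HK: "H ** K = mat 1"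
  shows "(A - c *\<^sub>R H) ** K ** (B - d *\<^sub>R H) = A ** K ** B - d *\<^sub>R A - c *\<^sub>R B + (c * d) *\<^sub>R H"
proof -
  have "(A - c *\<^sub>R H) ** K = A ** K - c *\<^sub>R mat 1"
    by (simp add: matrix_diff_rdistrib matrix_scaleR_left HK)
  moreover have "A ** K ** H = A"
    by (simp add: KH flip: matrix_mul_assoc)
  moreover have "(A ** K - c *\<^sub>R mat 1) ** (B - d *\<^sub>R H)
      = A ** K ** B - d *\<^sub>R (A ** K ** H) - c *\<^sub>R B + (c * d) *\<^sub>R H"
    by (simp add: matrix_diff_rdistrib matrix_diff_ldistrib matrix_scaleR_left matrix_scaleR_right
        algebra_simps)
  ultimately show ?thesis
    by simp
qed

lemma transpose_add: "transpose ((A::'a::semiring_1^'n^'m) + B) = transpose A + transpose B"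
  by (simp add: transpose_def vec_eq_iff)

lemma transpose_diff: "transpose ((A::'a::ring_1^'n^'m) - B) = transpose A - transpose B"
  by (simp add: transpose_def vec_eq_iff)

lemma transpose_neg: "transpose (- (A::'a::ring_1^'n^'m)) = - transpose A"
  by (simp add: transpose_def vec_eq_iff)

lemma trace_neg: "trace (- (A::'a::comm_ring_1^'n^'n)) = - trace A"
  by (simp add: trace_def sum_negf)

lemma trace_scaleR: "trace (c *\<^sub>R (A::real^'n^'n)) = c * trace A"
  by (simp add: trace_def sum_distrib_left)

lemma symmetric_inner_matrix:
  fixes K :: "real^'n^'n"
  assumes "transpose K = K"
  shows "(K *v u) \<bullet> v = u \<bullet> (K *v v)"
  using dot_lmul_matrix[of u K v] transpose_matrix_vector[of K u] assms by simp

lemma matrix_inv_right: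
  fixes A :: "'a::semiring_1^'n^'m"
  assumes "invertible A"
  shows "A ** matrix_inv A = mat 1"
  using someI_ex[OF assms[unfolded invertible_def]] unfolding matrix_inv_def by blast

lemma matrix_inv_left:
  fixes A :: "'a::semiring_1^'n^'m"
  assumes "invertible A"
  shows "matrix_inv A ** A = mat 1"
  using someI_ex[OF assms[unfolded invertible_def]] unfolding matrix_inv_def by blast

lemma matrix_inv_unique:
  fixes A B :: "real^'n^'n"
  assumes "A ** B = mat 1"
  shows "matrix_inv A = B"
proof -
  have "invertible A"
    using assms invertible_right_inverse by blast
  have "matrix_inv A = matrix_inv A ** (A ** B)"
    using assms by simp
  also have "\<dots> = B"
    by (simp add: matrix_mul_assoc matrix_inv_left[OF \<open>invertible A\<close>])
  finally show ?thesis .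
qed

lemma symmetric_matrix_inv:
  fixes A :: "real^'n^'n"
  assumes "invertible A" "transpose A = A"
  shows "transpose (matrix_inv A) = matrix_inv A"
proof -
  have "transpose (matrix_inv A) ** A = mat 1"
    using arg_cong[OF matrix_inv_right[OF assms(1)], of transpose] assms(2)
    by (simp add: matrix_transpose_mul)
  then have "A ** transpose (matrix_inv A) = mat 1"
    using matrix_left_right_inverse by blast
  then show ?thesis
    using matrix_inv_unique by metis
qed

lemma matrix_inv_scaleR:
  fixes A :: "real^'n^'n"
  assumes "invertible A" "c \<noteq> 0"
  shows "matrix_inv (c *\<^sub>R A) = (1 / c) *\<^sub>R matrix_inv A"
  by (rule matrix_inv_unique)
    (simp add: assms matrix_scaleR_left matrix_scaleR_right matrix_inv_right)

lemma matrix_inv_diff: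
  fixes p q :: "real^'n^'n"
  assumes "invertible p" "invertible q"
  shows "matrix_inv q - matrix_inv p = - (matrix_inv q ** (q - p) ** matrix_inv p)"
proof -
  have "matrix_inv q ** (q - p) ** matrix_inv p
      = (matrix_inv q ** q) ** matrix_inv p - matrix_inv q ** (p ** matrix_inv p)"
    by (simp add: matrix_diff_ldistrib matrix_diff_rdistrib matrix_mul_assoc)
  then show ?thesis
    using assms by (simp add: matrix_inv_left matrix_inv_right)
qed

lemma matrix_inv_cramer:
  fixes A :: "real^'n^'n"
  assumes "det A \<noteq> 0"
  shows "matrix_inv A $ i $ k = det (\<chi> r c. if c = i then axis k 1 $ r else A $ r $ c) / det A"
proof -
  have "A *v (matrix_inv A *v axis k 1) = axis k 1"
    using assms by (simp add: matrix_vector_mul_assoc matrix_inv_right invertible_det_nz)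
  then have "matrix_inv A *v axis k 1 = (\<chi> i. det (\<chi> r c. if c = i then axis k 1 $ r else A $ r $ c) / det A)"
    using cramer[OF assms] by blast
  then show ?thesis
    by (simp add: vec_eq_iff matrix_vector_mult_def axis_def if_distrib cong: if_cong)
qed

lemma continuous_on_det: "continuous_on S (det :: real^'n^'n \<Rightarrow> real)"
  unfolding det_def[abs_def] by (intro continuous_intros)

lemma isCont_matrix_inv:
  fixes p :: "real^'n^'n"
  assumes "det p \<noteq> 0"
  shows "isCont matrix_inv p"
proof -
  let ?S = "{A :: real^'n^'n. det A \<noteq> 0}"
  have "open ?S"
    using continuous_on_det by (intro open_Collect_neq) (auto intro: continuous_intros)
  have "continuous_on ?S (\<lambda>A. if c = i then axis k 1 $ r else A $ r $ c)" for i k r c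
    by (cases "c = i") (simp_all add: continuous_on_component continuous_on_id)
  then have "continuous_on ?S (\<lambda>A. \<chi> i k. det (\<chi> r c. if c = i then axis k 1 $ r else A $ r $ c) / det A)"
    by (intro continuous_intros continuous_on_compose2[OF continuous_on_det]) auto
  then have "continuous_on ?S matrix_inv"
    by (rule continuous_on_eq) (simp add: vec_eq_iff matrix_inv_cramer)
  then show ?thesis
    using \<open>open ?S\<close> assms continuous_on_eq_continuous_at by blast
qed

lemma has_real_derivative_matrix_inv_line:
  fixes p X :: "real^'n^'n"
  assumes "invertible p"
  shows "((\<lambda>t. matrix_inv (p + t *\<^sub>R X) $ k $ l) has_real_derivative
    (- (matrix_inv p ** X ** matrix_inv p)) $ k $ l) (at 0)"
proof -
  define P where "P = matrix_inv p"
  define R where "R t = matrix_inv (p + t *\<^sub>R X)" for t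
  have "det p \<noteq> 0"
    using assms invertible_det_nz by blast
  have line: "((\<lambda>t. p + t *\<^sub>R X) \<longlongrightarrow> p) (at 0)"
    by (auto intro!: tendsto_eq_intros)
  have R: "(R \<longlongrightarrow> P) (at 0)"
    unfolding R_def P_def using isCont_tendsto_compose[OF isCont_matrix_inv[OF \<open>det p \<noteq> 0\<close>] line] .
  have "\<forall>\<^sub>F t in at 0. det (p + t *\<^sub>R X) \<noteq> 0"
    using \<open>det p \<noteq> 0\<close> continuous_on_det[of UNIV] line
    by (intro tendsto_imp_eventually_ne) (auto intro: continuous_on_tendsto_compose)
  moreover have "\<forall>\<^sub>F t in at (0::real). t \<noteq> 0"
    by (simp add: eventually_at_filter)
  ultimately have "\<forall>\<^sub>F t in at 0. (R t $ k $ l - P $ k $ l) / t = (- (R t ** X ** P)) $ k $ l"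
  proof eventually_elim
    case (elim t)
    then have "R t - P = - (t *\<^sub>R (R t ** X ** P))"
      using matrix_inv_diff[OF assms, of "p + t *\<^sub>R X"] unfolding R_def P_def
      by (simp add: invertible_det_nz matrix_scaleR_left matrix_scaleR_right)
    then show ?case
      using elim by (simp add: vec_eq_iff)
  qed
  moreover have "((\<lambda>t. (- (R t ** X ** P)) $ k $ l) \<longlongrightarrow> (- (P ** X ** P)) $ k $ l) (at 0)"
    using R unfolding matrix_matrix_mult_def by (intro tendsto_intros) simp_all
  ultimately show ?thesis
    unfolding has_field_derivative_iff R_def P_def by (simp add: tendsto_cong)
qed

section \<open>The metric on positive definite quadratic forms\<close>

lemma quadruple_sum_eq_trace:
  fixes M N A B :: "real^'n^'n"
  shows "(\<Sum>k\<in>UNIV. \<Sum>l\<in>UNIV. \<Sum>r\<in>UNIV. \<Sum>s\<in>UNIV. M$k$l * N$r$s * A$k$r * B$s$l)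
    = trace (A ** N ** B ** transpose M)"
proof -
  have "trace (A ** N ** B ** transpose M)
      = (\<Sum>k\<in>UNIV. \<Sum>l\<in>UNIV. (\<Sum>s\<in>UNIV. (\<Sum>r\<in>UNIV. A$k$r * N$r$s) * B$s$l) * M$k$l)"
    by (simp add: trace_def matrix_matrix_mult_def transpose_def)
  also have "\<dots> = (\<Sum>k\<in>UNIV. \<Sum>l\<in>UNIV. \<Sum>s\<in>UNIV. \<Sum>r\<in>UNIV. M$k$l * N$r$s * A$k$r * B$s$l)"
    by (simp add: sum_distrib_left sum_distrib_right mult_ac)
  also have "\<dots> = (\<Sum>k\<in>UNIV. \<Sum>l\<in>UNIV. \<Sum>r\<in>UNIV. \<Sum>s\<in>UNIV. M$k$l * N$r$s * A$k$r * B$s$l)"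
    by (intro sum.cong refl sum.swap)
  finally show ?thesis ..
qed

lemma gS2_eq_trace: "gS2 q A B = trace (A ** matrix_inv q ** B ** transpose (matrix_inv q)) / 4"
  unfolding gS2_def quadruple_sum_eq_trace by simp

lemma gS2_diff_left: "gS2 q (A - A') B = gS2 q A B - gS2 q A' B"
  by (simp add: gS2_eq_trace matrix_diff_rdistrib trace_sub diff_divide_distrib)

lemma has_real_derivative_gS2_line:
  fixes p X A B :: "real^'n^'n"
  assumes "invertible p"
  defines "P \<equiv> matrix_inv p" and "D \<equiv> - (matrix_inv p ** X ** matrix_inv p)"
  shows "((\<lambda>t. gS2 (p + t *\<^sub>R X) A B) has_real_derivative
    (trace (A ** P ** B ** transpose D) + trace (A ** D ** B ** transpose P)) / 4) (at 0)"
proof -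
  have inv: "((\<lambda>t. matrix_inv (p + t *\<^sub>R X) $ k $ l) has_real_derivative D $ k $ l) (at 0)" for k l
    unfolding D_def by (rule has_real_derivative_matrix_inv_line[OF assms(1)])
  have "((\<lambda>t. gS2 (p + t *\<^sub>R X) A B) has_real_derivative
      1/4 * (\<Sum>k\<in>UNIV. \<Sum>l\<in>UNIV. \<Sum>r\<in>UNIV. \<Sum>s\<in>UNIV.
        (matrix_inv (p + 0 *\<^sub>R X) $k$l * D$r$s + D$k$l * matrix_inv (p + 0 *\<^sub>R X) $r$s)
          * A$k$r * B$s$l)) (at 0)"
    unfolding gS2_def by (intro DERIV_cmult DERIV_sum DERIV_cmult_right DERIV_mult' inv)
  moreover have "1/4 * (\<Sum>k\<in>UNIV. \<Sum>l\<in>UNIV. \<Sum>r\<in>UNIV. \<Sum>s\<in>UNIV.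
        (matrix_inv (p + 0 *\<^sub>R X) $k$l * D$r$s + D$k$l * matrix_inv (p + 0 *\<^sub>R X) $r$s)
          * A$k$r * B$s$l)
    = ((\<Sum>k\<in>UNIV. \<Sum>l\<in>UNIV. \<Sum>r\<in>UNIV. \<Sum>s\<in>UNIV. D$k$l * P$r$s * A$k$r * B$s$l)
      + (\<Sum>k\<in>UNIV. \<Sum>l\<in>UNIV. \<Sum>r\<in>UNIV. \<Sum>s\<in>UNIV. P$k$l * D$r$s * A$k$r * B$s$l)) / 4"
    unfolding P_def by (simp only: add_0_right scale_zero_left sum.distrib[symmetric] distrib_right)
      (simp add: add.commute)
  ultimately show ?thesis
    unfolding quadruple_sum_eq_trace by simp
qed

lemma dirderiv_gS2:
  fixes p X A B :: "real^'n^'n"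
  assumes "invertible p" "transpose p = p" "transpose X = X"
  defines "P \<equiv> matrix_inv p"
  shows "dirderiv (\<lambda>q. gS2 q A B) p X
    = - (trace (A ** P ** B ** P ** X ** P) + trace (A ** P ** X ** P ** B ** P)) / 4"
proof -
  have P: "transpose P = P"
    unfolding P_def using symmetric_matrix_inv[OF assms(1,2)] .
  have D: "transpose (- (P ** X ** P)) = - (P ** X ** P)"
    by (simp add: transpose_neg matrix_transpose_mul P assms(3) matrix_mul_assoc)
  have "dirderiv (\<lambda>q. gS2 q A B) p X
      = (trace (A ** P ** B ** transpose (- (P ** X ** P))) + trace (A ** (- (P ** X ** P)) ** B ** transpose P)) / 4"
    unfolding dirderiv_def P_def using has_real_derivative_gS2_line[OF assms(1), of X A B]
    by (intro vector_derivative_at) (simp add: has_real_derivative_iff_has_vector_derivative)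
  then show ?thesis
    unfolding D P by (simp add: matrix_neg_left matrix_neg_right trace_neg matrix_mul_assoc)
qed

lemma christoffel_eqI:
  assumes "w \<in> V"
    and koszul: "\<And>Z. Z \<in> V \<Longrightarrow> g p w Z = (dirderiv (\<lambda>q. g q Y Z) p X
      + dirderiv (\<lambda>q. g q X Z) p Y - dirderiv (\<lambda>q. g q X Y) p Z) / 2"
    and nondegenerate: "\<And>u. u \<in> V \<Longrightarrow> (\<And>Z. Z \<in> V \<Longrightarrow> g p u Z = g p w Z) \<Longrightarrow> u = w"
  shows "christoffel V g p X Y = w"
  unfolding christoffel_def
proof (rule the_equality)
  show "w \<in> V \<and> (\<forall>Z\<in>V. g p w Z = (dirderiv (\<lambda>q. g q Y Z) p X
      + dirderiv (\<lambda>q. g q X Z) p Y - dirderiv (\<lambda>q. g q X Y) p Z) / 2)"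
    using assms(1) koszul by blast
  show "u = w" if u: "u \<in> V \<and> (\<forall>Z\<in>V. g p u Z = (dirderiv (\<lambda>q. g q Y Z) p X
      + dirderiv (\<lambda>q. g q X Z) p Y - dirderiv (\<lambda>q. g q X Y) p Z) / 2)" for u
  proof (rule nondegenerate)
    show "u \<in> V" using u by blast
    show "g p u Z = g p w Z" if "Z \<in> V" for Z
      by (subst koszul[OF that]) (use u that in blast)
  qed
qed

lemma gS2_nondegenerate:
  fixes p u w :: "real^'n^'n"
  assumes "invertible p" "transpose p = p" "u \<in> Sym2" "w \<in> Sym2"
    and "\<And>Z. Z \<in> Sym2 \<Longrightarrow> gS2 p u Z = gS2 p w Z"
  shows "u = w"
proof -
  define d where "d = u - w"
  define P where "P = matrix_inv p"
  have d: "transpose d = d"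
    using assms(3,4) unfolding d_def Sym2_def by (simp add: transpose_def vec_eq_iff)
  have "p ** d ** p \<in> Sym2"
    unfolding Sym2_def by (simp add: matrix_transpose_mul d assms(2) matrix_mul_assoc)
  then have "gS2 p d (p ** d ** p) = 0"
    using assms(5) unfolding d_def gS2_diff_left by simp
  moreover have "gS2 p d (p ** d ** p) = trace (d ** d) / 4"
  proof -
    have "gS2 p d (p ** d ** p) = trace (d ** ((P ** p) ** d ** (p ** P))) / 4"
      using symmetric_matrix_inv[OF assms(1,2)]
      by (simp add: gS2_eq_trace matrix_mul_assoc flip: P_def)
    then show ?thesis
      using matrix_inv_left[OF assms(1)] matrix_inv_right[OF assms(1)] by (simp add: P_def)
  qed
  moreover have "trace (d ** d) = (\<Sum>k\<in>UNIV. \<Sum>r\<in>UNIV. (d$k$r)\<^sup>2)"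
    using d by (simp add: trace_def matrix_matrix_mult_def power2_eq_square vec_eq_iff transpose_def)
  ultimately have "(\<Sum>k\<in>UNIV. \<Sum>r\<in>UNIV. (d$k$r)\<^sup>2) = 0"
    by simp
  then have "d$k$r = 0" for k r
    by (simp add: sum_nonneg_eq_0_iff sum_nonneg)
  then show ?thesis
    unfolding d_def by (simp add: vec_eq_iff)
qed

lemma koszul_gS2:
  fixes p X Y Z :: "real^'n^'n"
  assumes p: "invertible p" "transpose p = p" and "X \<in> Sym2" "Y \<in> Sym2" "Z \<in> Sym2"
  defines "P \<equiv> matrix_inv p"
  shows "(dirderiv (\<lambda>q. gS2 q Y Z) p X + dirderiv (\<lambda>q. gS2 q X Z) p Y - dirderiv (\<lambda>q. gS2 q X Y) p Z) / 2
    = - (trace (X ** P ** Y ** P ** Z ** P) + trace (Y ** P ** X ** P ** Z ** P)) / 8"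
proof -
  define t where "t A B C = trace (A ** P ** B ** P ** C ** P)" for A B C
  have "t Y Z X = t X Y Z"
    using trace_mul_sym[of "Y ** P ** Z ** P" "X ** P"] unfolding t_def by (simp add: matrix_mul_assoc)
  moreover have "(dirderiv (\<lambda>q. gS2 q Y Z) p X + dirderiv (\<lambda>q. gS2 q X Z) p Y
      - dirderiv (\<lambda>q. gS2 q X Y) p Z) / 2 = - (t Y Z X + t Y X Z) / 8"
    using assms(3-5) unfolding Sym2_def
    by (simp add: dirderiv_gS2[OF p] t_def[symmetric] P_def[symmetric] field_simps)
  ultimately show ?thesis
    unfolding t_def by simp
qed

lemma christoffel_gS2:
  fixes p X Y :: "real^'n^'n"
  assumes p: "invertible p" "transpose p = p" and X: "X \<in> Sym2" and Y: "Y \<in> Sym2"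
  shows "christoffel Sym2 gS2 p X Y = (-1/2) *\<^sub>R (X ** matrix_inv p ** Y + Y ** matrix_inv p ** X)"
proof (rule christoffel_eqI)
  define P where "P = matrix_inv p"
  have P: "transpose P = P"
    unfolding P_def using symmetric_matrix_inv[OF p] .
  show "(-1/2) *\<^sub>R (X ** matrix_inv p ** Y + Y ** matrix_inv p ** X) \<in> Sym2"
  proof -
    have "transpose (X ** P ** Y) = Y ** P ** X" "transpose (Y ** P ** X) = X ** P ** Y"
      using X Y P by (simp_all add: Sym2_def matrix_transpose_mul matrix_mul_assoc)
    then show ?thesis
      by (simp add: Sym2_def transpose_neg transpose_scalar transpose_add add.commute flip: P_def)
  qed
  show "gS2 p ((-1/2) *\<^sub>R (X ** matrix_inv p ** Y + Y ** matrix_inv p ** X)) Z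
      = (dirderiv (\<lambda>q. gS2 q Y Z) p X + dirderiv (\<lambda>q. gS2 q X Z) p Y
        - dirderiv (\<lambda>q. gS2 q X Y) p Z) / 2" if "Z \<in> Sym2" for Z
  proof -
    have "gS2 p ((-1/2) *\<^sub>R (X ** P ** Y + Y ** P ** X)) Z
        = - (trace (X ** P ** Y ** P ** Z ** P) + trace (Y ** P ** X ** P ** Z ** P)) / 8"
      unfolding gS2_eq_trace P_def[symmetric] P
      by (simp add: matrix_neg_left trace_neg matrix_add_rdistrib trace_add trace_scaleR matrix_mul_assoc
          matrix_scaleR_left) (simp add: field_simps)
    then show ?thesis
      unfolding koszul_gS2[OF p X Y \<open>Z \<in> Sym2\<close>] P_def .
  qed
  show "u = (-1/2) *\<^sub>R (X ** matrix_inv p ** Y + Y ** matrix_inv p ** X)"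
    if "u \<in> Sym2" "\<And>Z. Z \<in> Sym2 \<Longrightarrow>
      gS2 p u Z = gS2 p ((-1/2) *\<^sub>R (X ** matrix_inv p ** Y + Y ** matrix_inv p ** X)) Z" for u
    by (rule gS2_nondegenerate[OF p that(1) _ that(2)]) fact
qed

section \<open>Hessian metrics\<close>

definition hess :: "(real^'n::finite \<Rightarrow> real) \<Rightarrow> real^'n \<Rightarrow> real^'n^'n" where
  "hess F x = (\<chi> k l. pd k (pd l F) x)"

lemma qPhi_eq_hess: "qPhi F x = exp (- F x / 3) *\<^sub>R hess F x"
  by (simp add: qPhi_def hess_def vec_eq_iff)

lemma Gmet_eq_inner: "Gmet F x u v = u \<bullet> (hess F x *v v)"
  by (simp add: Gmet_def hess_def inner_vec_def matrix_vector_mult_def sum_distrib_left mult_ac)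

lemma invertible_hess_if_positive_definite:
  assumes "\<And>v. v \<noteq> 0 \<Longrightarrow> Gmet F x v v > 0"
  shows "invertible (hess F x)"
proof -
  have "v = 0" if "hess F x *v v = 0" for v
    using assms[of v] that by (auto simp: Gmet_eq_inner)
  then show ?thesis
    using matrix_left_invertible_ker invertible_left_inverse by blast
qed

lemma Gmet_axis_left: "Gmet F q (axis i 1) v = (\<Sum>l\<in>UNIV. v$l * pd i (pd l F) q)"
proof -
  have "Gmet F q (axis i 1) v = (\<Sum>k\<in>UNIV. axis i 1 $ k * (\<Sum>l\<in>UNIV. v$l * pd k (pd l F) q))"
    unfolding Gmet_def by (simp add: sum_distrib_left mult_ac)
  then show ?thesis by (simp add: sum_axis_mult)
qed

lemma Gmet_axis_axis: "Gmet F q (axis i 1) (axis j 1) = pd i (pd j F) q"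
  unfolding Gmet_axis_left by (simp add: sum_axis_mult)

lemma Yuk3_nested: "Yuk3 F x u v z
    = (\<Sum>i\<in>UNIV. u$i * (\<Sum>j\<in>UNIV. v$j * (\<Sum>m\<in>UNIV. z$m * Yukawa F x i j m)))"
  unfolding Yuk3_def by (simp add: sum_distrib_left mult_ac)

locale smooth_potential =
  fixes U :: "(real^'n::finite) set" and F :: "real^'n \<Rightarrow> real"
  assumes open_domain: "open U" and smooth: "smooth_on U F"
begin

lemma smooth_pd: "smooth_on U (pd i F)" "smooth_on U (pd i (pd j F))" "smooth_on U (pd i (pd j (pd k F)))"
  by (simp_all add: smooth smooth_on_pd)

lemma differentiable_pd:
  assumes "y \<in> U"
  shows "F differentiable (at y)" "pd i F differentiable (at y)" "pd i (pd j F) differentiable (at y)"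
    "pd i (pd j (pd k F)) differentiable (at y)"
  using smooth_on_imp_differentiable[OF smooth assms] smooth_on_imp_differentiable[OF smooth_pd(1) assms]
    smooth_on_imp_differentiable[OF smooth_pd(2) assms] smooth_on_imp_differentiable[OF smooth_pd(3) assms]
  by blast+

lemma differentiable_exp_third: "y \<in> U \<Longrightarrow> (\<lambda>z. exp (- F z / 3)) differentiable (at y)"
  using smooth_on_imp_differentiable[OF smooth_on_exp_third[OF open_domain smooth]] .

lemma pd_pd_commute: "y \<in> U \<Longrightarrow> pd i (pd j F) y = pd j (pd i F) y"
  using smooth_on_pd_commute[OF open_domain _ smooth] .

lemma pd3_commute_outer: "y \<in> U \<Longrightarrow> pd i (pd j (pd k F)) y = pd j (pd i (pd k F)) y"
  using smooth_on_pd_commute[OF open_domain _ smooth_pd(1)] .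

lemma pd3_commute_inner: "y \<in> U \<Longrightarrow> pd i (pd j (pd k F)) y = pd i (pd k (pd j F)) y"
  using smooth_on_pd_commute_inner[OF open_domain _ smooth] .

lemma symmetric_hess: "y \<in> U \<Longrightarrow> transpose (hess F y) = hess F y"
  by (simp add: hess_def transpose_def vec_eq_iff pd_pd_commute)

lemma pd_hess: "y \<in> U \<Longrightarrow> pd m (hess F) y = (\<chi> k l. pd m (pd k (pd l F)) y)"
  unfolding hess_def[abs_def] by (intro pd_mat_lambda differentiable_pd)

lemma symmetric_pd_hess: "y \<in> U \<Longrightarrow> transpose (pd m (hess F) y) = pd m (hess F) y"
  by (simp add: pd_hess transpose_def vec_eq_iff pd3_commute_inner)

lemma pd_pd_hess: "y \<in> U \<Longrightarrow> pd a (pd b (hess F)) y = (\<chi> k l. pd a (pd b (pd k (pd l F))) y)"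
  unfolding hess_def[abs_def] by (intro pd_pd_mat_lambda[OF open_domain] smooth_pd)

lemma pd_qPhi:
  assumes "y \<in> U"
  shows "pd m (qPhi F) y = exp (- F y / 3) *\<^sub>R (pd m (hess F) y - (pd m F y / 3) *\<^sub>R hess F y)"
proof -
  have "pd m (qPhi F) y = (\<chi> k l. pd m (\<lambda>z. exp (- F z / 3) * pd k (pd l F) z) y)"
    unfolding qPhi_def[abs_def] using assms
    by (intro pd_mat_lambda differentiable_mult differentiable_pd differentiable_exp_third)
  also have "\<dots> = exp (- F y / 3) *\<^sub>R (pd m (hess F) y - (pd m F y / 3) *\<^sub>R hess F y)"
    using assms differentiable_exp_third[OF assms] pd_exp_third[OF differentiable_pd(1)[OF assms]]
    by (simp add: vec_eq_iff pd_mult differentiable_pd pd_hess hess_def algebra_simps)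
  finally show ?thesis .
qed

lemma pd_pd_qPhi:
  assumes "x \<in> U"
  shows "pd a (pd b (qPhi F)) x = exp (- F x / 3) *\<^sub>R (pd a (pd b (hess F)) x
    - (pd a (pd b F) x / 3) *\<^sub>R hess F x - (pd b F x / 3) *\<^sub>R pd a (hess F) x
    - (pd a F x / 3) *\<^sub>R pd b (hess F) x + (pd a F x * pd b F x / 9) *\<^sub>R hess F x)"
proof -
  have e: "smooth_on U (\<lambda>z. exp (- F z / 3))"
    using smooth_on_exp_third[OF open_domain smooth] .
  have "pd a (pd b (qPhi F)) x = (\<chi> k l. pd a (pd b (\<lambda>z. exp (- F z / 3) * pd k (pd l F) z)) x)"
    unfolding qPhi_def[abs_def]
    by (intro pd_pd_mat_lambda[OF open_domain assms] smooth_on_mult[OF open_domain e] smooth_pd)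
  also have "\<dots> = (\<chi> k l. exp (- F x / 3) * (pd a F x * pd b F x / 9 - pd a (pd b F) x / 3) * pd k (pd l F) x
      + - exp (- F x / 3) * pd b F x / 3 * pd a (pd k (pd l F)) x
      + - exp (- F x / 3) * pd a F x / 3 * pd b (pd k (pd l F)) x
      + exp (- F x / 3) * pd a (pd b (pd k (pd l F))) x)"
    by (simp only: pd_pd_mult[OF open_domain assms e smooth_pd(2)] pd_pd_exp_third[OF open_domain assms smooth]
        pd_exp_third[OF differentiable_pd(1)[OF assms]])
  also have "\<dots> = exp (- F x / 3) *\<^sub>R (pd a (pd b (hess F)) x
    - (pd a (pd b F) x / 3) *\<^sub>R hess F x - (pd b F x / 3) *\<^sub>R pd a (hess F) x
    - (pd a F x / 3) *\<^sub>R pd b (hess F) x + (pd a F x * pd b F x / 9) *\<^sub>R hess F x)"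
    using assms by (simp add: vec_eq_iff pd_hess pd_pd_hess hess_def algebra_simps)
  finally show ?thesis .
qed

lemma pullback_LC_qPhi:
  assumes x: "x \<in> U" and H: "invertible (hess F x)"
  defines "K \<equiv> matrix_inv (hess F x)"
  shows "pullback_LC Sym2 gS2 (qPhi F) (pd b (qPhi F)) a x = exp (- F x / 3) *\<^sub>R
    (pd a (pd b (hess F)) x - (pd a (pd b F) x / 3) *\<^sub>R hess F x
      - (1/2) *\<^sub>R (pd a (hess F) x ** K ** pd b (hess F) x + pd b (hess F) x ** K ** pd a (hess F) x))"
proof -
  define \<phi> where "\<phi> = exp (- F x / 3)"
  define M where "M m = pd m (hess F) x - (pd m F x / 3) *\<^sub>R hess F x" for m
  have "\<phi> > 0" unfolding \<phi>_def by simp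
  have Q: "qPhi F x = \<phi> *\<^sub>R hess F x"
    unfolding \<phi>_def by (rule qPhi_eq_hess)
  have dQ: "pd m (qPhi F) x = \<phi> *\<^sub>R M m" for m
    unfolding \<phi>_def M_def by (rule pd_qPhi[OF x])
  have Q_invertible: "invertible (qPhi F x)"
    unfolding Q using scalar_invertible[OF _ H] \<open>\<phi> > 0\<close> by simp
  have Q_symmetric: "transpose (qPhi F x) = qPhi F x"
    unfolding Q by (simp add: transpose_scalar symmetric_hess[OF x])
  have dQ_Sym2: "pd m (qPhi F) x \<in> Sym2" for m
    unfolding dQ M_def Sym2_def
    by (simp add: transpose_scalar transpose_diff symmetric_hess[OF x] symmetric_pd_hess[OF x])
  have "pd c (qPhi F) x ** matrix_inv (qPhi F x) ** pd d (qPhi F) x = \<phi> *\<^sub>R (M c ** K ** M d)" for c d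
    unfolding Q dQ matrix_inv_scaleR[OF H less_imp_neq[OF \<open>\<phi> > 0\<close>, symmetric]] K_def[symmetric]
    using \<open>\<phi> > 0\<close> by (simp add: matrix_scaleR_left matrix_scaleR_right)
  then have "christoffel Sym2 gS2 (qPhi F x) (pd a (qPhi F) x) (pd b (qPhi F) x)
      = (-1/2) *\<^sub>R (\<phi> *\<^sub>R (M a ** K ** M b) + \<phi> *\<^sub>R (M b ** K ** M a))"
    by (simp add: christoffel_gS2[OF Q_invertible Q_symmetric dQ_Sym2 dQ_Sym2])
  moreover have "M c ** K ** M d = pd c (hess F) x ** K ** pd d (hess F) x
      - (pd d F x / 3) *\<^sub>R pd c (hess F) x - (pd c F x / 3) *\<^sub>R pd d (hess F) x
      + (pd c F x / 3 * (pd d F x / 3)) *\<^sub>R hess F x" for c d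
    unfolding M_def K_def using H by (simp add: matrix_mult_shifted matrix_inv_left matrix_inv_right)
  ultimately show ?thesis
    unfolding pullback_LC_def pd_pd_qPhi[OF x] \<phi>_def[symmetric]
    by (simp add: vec_eq_iff algebra_simps)
qed

lemma Gmet_eq_inner_hess_left: "y \<in> U \<Longrightarrow> Gmet F y u v = (hess F y *v u) \<bullet> v"
  using symmetric_hess[of y] dot_lmul_matrix[of u "hess F y" v] transpose_matrix_vector[of "hess F y" u]
  by (simp add: Gmet_eq_inner)

lemma dirderiv_Gmet_axis:
  assumes "y \<in> U"
  shows "dirderiv (\<lambda>q. Gmet F q (axis i 1) Z) y (axis j 1) = (\<Sum>l\<in>UNIV. Z$l * pd j (pd i (pd l F)) y)"
proof -
  have "dirderiv (\<lambda>q. Gmet F q (axis i 1) Z) y (axis j 1) = pd j (\<lambda>q. \<Sum>l\<in>UNIV. Z$l * pd i (pd l F) q) y"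
    unfolding pd_def Gmet_axis_left ..
  also have "\<dots> = (\<Sum>l\<in>UNIV. Z$l * pd j (pd i (pd l F)) y)"
    using assms by (simp add: pd_sum pd_cmult differentiable_pd differentiable_mult)
  finally show ?thesis .
qed

lemma koszul_Gmet:
  assumes x: "x \<in> U"
  shows "(dirderiv (\<lambda>q. Gmet F q (axis b 1) Z) x (axis a 1) + dirderiv (\<lambda>q. Gmet F q (axis a 1) Z) x (axis b 1)
      - dirderiv (\<lambda>q. Gmet F q (axis a 1) (axis b 1)) x Z) / 2 = (pd a (hess F) x $ b \<bullet> Z) / 2"
proof -
  have t: "pd a (hess F) x $ b \<bullet> Z = (\<Sum>l\<in>UNIV. Z$l * pd a (pd b (pd l F)) x)"
    using x by (simp add: pd_hess inner_vec_def mult.commute)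
  have "pd l (pd a (pd b F)) x = pd a (pd b (pd l F)) x" for l
    using pd3_commute_outer[OF x, of l a] pd3_commute_inner[OF x, of a l b] by simp
  then have d3: "dirderiv (\<lambda>q. Gmet F q (axis a 1) (axis b 1)) x Z = pd a (hess F) x $ b \<bullet> Z"
    unfolding Gmet_axis_axis t dirderiv_eq_sum_pd[OF differentiable_pd(3)[OF x, of a b]] by simp
  have d2: "dirderiv (\<lambda>q. Gmet F q (axis a 1) Z) x (axis b 1) = pd a (hess F) x $ b \<bullet> Z"
    unfolding dirderiv_Gmet_axis[OF x] t pd3_commute_outer[OF x, of b a] ..
  have d1: "dirderiv (\<lambda>q. Gmet F q (axis b 1) Z) x (axis a 1) = pd a (hess F) x $ b \<bullet> Z"
    unfolding dirderiv_Gmet_axis[OF x] t ..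
  show ?thesis
    unfolding d1 d2 d3 by simp
qed

lemma Gmet_nondegenerate:
  assumes x: "x \<in> U" and H: "invertible (hess F x)" and eq: "\<And>Z. Gmet F x u Z = Gmet F x w Z"
  shows "u = w"
proof -
  have "(hess F x *v u - hess F x *v w) \<bullet> Z = 0" for Z
    using eq[of Z] unfolding inner_diff_left Gmet_eq_inner_hess_left[OF x] by simp
  from this[of "hess F x *v u - hess F x *v w"] have "hess F x *v u = hess F x *v w"
    by simp
  then have "matrix_inv (hess F x) *v (hess F x *v u) = matrix_inv (hess F x) *v (hess F x *v w)"
    by simp
  then show ?thesis
    using H by (simp add: matrix_vector_mul_assoc matrix_inv_left)
qed

lemma nablaG_hess:
  assumes x: "x \<in> U" and H: "invertible (hess F x)"
  shows "nablaG F x a b = (1/2) *\<^sub>R (matrix_inv (hess F x) *v (pd a (hess F) x $ b))"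
  unfolding nablaG_def
proof (rule christoffel_eqI)
  show "Gmet F x ((1/2) *\<^sub>R (matrix_inv (hess F x) *v (pd a (hess F) x $ b))) Z
      = (dirderiv (\<lambda>q. Gmet F q (axis b 1) Z) x (axis a 1) + dirderiv (\<lambda>q. Gmet F q (axis a 1) Z) x (axis b 1)
        - dirderiv (\<lambda>q. Gmet F q (axis a 1) (axis b 1)) x Z) / 2" for Z
    unfolding koszul_Gmet[OF x] using H
    by (simp add: Gmet_eq_inner_hess_left[OF x] matrix_vector_mult_scaleR matrix_vector_mul_assoc
        matrix_inv_right)
qed (use Gmet_nondegenerate[OF x H] in auto)

lemma symmetric_hess_inv_entry:
  assumes "y \<in> U" "invertible (hess F y)"
  shows "matrix_inv (hess F y) $ i $ j = matrix_inv (hess F y) $ j $ i"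
proof -
  have "transpose (matrix_inv (hess F y)) = matrix_inv (hess F y)"
    using symmetric_matrix_inv[OF assms(2) symmetric_hess[OF assms(1)]] .
  then show ?thesis
    by (metis transpose_def vec_lambda_beta)
qed

lemma nablaG_component:
  assumes "x \<in> U" "invertible (hess F x)"
  shows "nablaG F x a i $ j = (\<Sum>p\<in>UNIV. matrix_inv (hess F x) $ j $ p * pd a (hess F) x $ i $ p) / 2"
  unfolding nablaG_hess[OF assms] by (simp add: matrix_vector_mult_def sum_divide_distrib)

lemma Yuk3_axis_nablaG_axis:
  assumes x: "x \<in> U" and H: "invertible (hess F x)"
  defines "K \<equiv> matrix_inv (hess F x)"
  shows "Yuk3 F x (axis b 1) (nablaG F x a k) (axis l 1) = (pd a (hess F) x ** K ** pd b (hess F) x) $ k $ l / 4"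
proof -
  define T where "T m = pd m (hess F) x" for m
  have nabla: "nablaG F x a k $ j = (\<Sum>p\<in>UNIV. T a $ k $ p * K $ p $ j) / 2" for j
    unfolding nablaG_component[OF x H] T_def K_def using symmetric_hess_inv_entry[OF x H]
    by (simp add: mult.commute)
  have "Yuk3 F x (axis b 1) (nablaG F x a k) (axis l 1)
      = (\<Sum>j\<in>UNIV. (\<Sum>p\<in>UNIV. T a $ k $ p * K $ p $ j) / 2 * (T b $ j $ l / 2))"
    unfolding Yuk3_nested sum_axis_mult nabla Yukawa_def T_def using x by (simp add: pd_hess)
  also have "\<dots> = (\<Sum>j\<in>UNIV. \<Sum>p\<in>UNIV. T a $ k $ p * K $ p $ j * T b $ j $ l) / 4"
    by (simp add: sum_divide_distrib sum_distrib_right)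
  also have "\<dots> = (T a ** K ** T b) $ k $ l / 4"
    by (simp add: matrix_matrix_mult_def sum_distrib_right)
  finally show ?thesis
    unfolding T_def .
qed

lemma Yuk3_axis_axis_nablaG:
  assumes x: "x \<in> U" and H: "invertible (hess F x)"
  defines "K \<equiv> matrix_inv (hess F x)"
  shows "Yuk3 F x (axis b 1) (axis k 1) (nablaG F x a l) = (pd b (hess F) x ** K ** pd a (hess F) x) $ k $ l / 4"
proof -
  define T where "T m = pd m (hess F) x" for m
  have T_sym: "T m $ i $ j = T m $ j $ i" for m i j
    unfolding T_def using x by (simp add: pd_hess pd3_commute_inner)
  have "Yuk3 F x (axis b 1) (axis k 1) (nablaG F x a l)
      = (\<Sum>m\<in>UNIV. (\<Sum>p\<in>UNIV. K $ m $ p * T a $ l $ p) / 2 * (T b $ k $ m / 2))"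
    unfolding Yuk3_nested sum_axis_mult nablaG_component[OF x H] Yukawa_def T_def K_def
    using x by (simp add: pd_hess)
  also have "\<dots> = (\<Sum>p\<in>UNIV. \<Sum>m\<in>UNIV. T b $ k $ m * K $ m $ p * T a $ p $ l) / 4"
    by (subst sum.swap) (simp add: sum_divide_distrib sum_distrib_right sum_distrib_left T_sym[of a l] mult_ac)
  also have "\<dots> = (T b ** K ** T a) $ k $ l / 4"
    by (simp add: matrix_matrix_mult_def sum_distrib_right)
  finally show ?thesis
    unfolding T_def .
qed

lemma nablaG_Yukawa_eq:
  assumes x: "x \<in> U" and H: "invertible (hess F x)"
  defines "K \<equiv> matrix_inv (hess F x)"
  shows "nablaG_Yukawa F x a b k l = (pd a (pd b (hess F)) x $ k $ l
    - (\<Sum>m\<in>UNIV. nablaG F x a b $ m *\<^sub>R pd m (hess F) x) $ k $ l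
    - (pd a (hess F) x ** K ** pd b (hess F) x) $ k $ l / 2
    - (pd b (hess F) x ** K ** pd a (hess F) x) $ k $ l / 2) / 2"
proof -
  have "pd a (\<lambda>y. Yukawa F y b k l) x = pd a (pd b (hess F)) x $ k $ l / 2"
    unfolding Yukawa_def pd_cmult[OF differentiable_pd(4)[OF x]] using x by (simp add: pd_pd_hess)
  moreover have "Yuk3 F x (nablaG F x a b) (axis k 1) (axis l 1)
      = (\<Sum>m\<in>UNIV. nablaG F x a b $ m *\<^sub>R pd m (hess F) x) $ k $ l / 2"
    unfolding Yuk3_nested sum_axis_mult using x by (simp add: Yukawa_def pd_hess sum_divide_distrib)
  ultimately show ?thesis
    unfolding nablaG_Yukawa_def K_def Yuk3_axis_nablaG_axis[OF x H] Yuk3_axis_axis_nablaG[OF x H] by simp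
qed

lemma qPhi_differentiable: "y \<in> U \<Longrightarrow> qPhi F differentiable (at y)"
  unfolding qPhi_def[abs_def]
  by (intro differentiable_vec_lambda differentiable_mult differentiable_exp_third differentiable_pd)

end

lemma euler_relation_pd:
  assumes U: "open U" "y \<in> U" and f: "smooth_on U f"
    and euler: "\<And>z. z \<in> U \<Longrightarrow> (\<Sum>m\<in>UNIV. z$m * pd m f z) = d * f z + c"
  shows "(\<Sum>m\<in>UNIV. y$m * pd m (pd a f) y) = (d - 1) * pd a f y"
proof -
  have df: "f differentiable (at y)" "pd m f differentiable (at y)" for m
    using smooth_on_imp_differentiable[OF f U(2)] smooth_on_imp_differentiable[OF smooth_on_pd[OF f] U(2)]
    by blast+
  have coord: "(\<lambda>z. z $ m) differentiable (at y)" for m :: 'a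
    by (simp add: bounded_linear_imp_differentiable bounded_linear_vec_nth)
  have "pd a (\<lambda>z. \<Sum>m\<in>UNIV. z$m * pd m f z) y = pd a (\<lambda>z. d * f z + c) y"
    using euler by (intro pd_cong_open[OF U]) simp
  moreover have "pd a (\<lambda>z. d * f z + c) y = d * pd a f y"
    using df by (simp add: pd_add pd_cmult pd_const)
  moreover have "pd a (\<lambda>z. \<Sum>m\<in>UNIV. z$m * pd m f z) y
      = pd a f y + (\<Sum>m\<in>UNIV. y$m * pd a (pd m f) y)"
    using df coord by (simp add: pd_sum pd_mult pd_component differentiable_mult sum.distrib sum_axis_mult)
  moreover have "pd a (pd m f) y = pd m (pd a f) y" for m
    using smooth_on_pd_commute[OF U f] .
  ultimately show ?thesis
    by (simp add: algebra_simps)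
qed

locale log_homogeneous_potential = smooth_potential +
  fixes c :: real
  assumes euler: "\<And>y. y \<in> U \<Longrightarrow> (\<Sum>m\<in>UNIV. y$m * pd m F y) = c"
begin

lemma euler_pd: "y \<in> U \<Longrightarrow> (\<Sum>m\<in>UNIV. y$m * pd m (pd a F) y) = - pd a F y"
  using euler_relation_pd[OF open_domain _ smooth, where d = 0 and c = c] euler by simp

lemma euler_pd_pd: "y \<in> U \<Longrightarrow> (\<Sum>m\<in>UNIV. y$m * pd m (pd b (pd a F)) y) = - 2 * pd b (pd a F) y"
  using euler_relation_pd[OF open_domain _ smooth_pd(1), where d = "- 1" and c = 0] euler_pd by simp

lemma euler_hess: "y \<in> U \<Longrightarrow> hess F y *v y = - (\<chi> i. pd i F y)"
  using euler_pd pd_pd_commute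
  by (simp add: hess_def matrix_vector_mult_def vec_eq_iff mult.commute)

lemma euler_pd_hess: "y \<in> U \<Longrightarrow> pd a (hess F) y *v y = - 2 *\<^sub>R (hess F y $ a)"
proof -
  assume y: "y \<in> U"
  have "pd a (pd b (pd m F)) y = pd m (pd b (pd a F)) y" for b m
    using pd3_commute_outer[OF y, of a b m] pd3_commute_inner[OF y, of b a m]
      smooth_on_pd_commute[OF open_domain y smooth_pd(1), of m b a] by simp
  then show ?thesis
    using y euler_pd_pd pd_pd_commute
    by (simp add: pd_hess hess_def matrix_vector_mult_def vec_eq_iff mult.commute)
qed

lemma inner_nablaG_grad:
  assumes x: "x \<in> U" and H: "invertible (hess F x)"
  shows "(\<Sum>m\<in>UNIV. nablaG F x a b $ m * pd m F x) = pd a (pd b F) x"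
proof -
  define K where "K = matrix_inv (hess F x)"
  define g where "g = (\<chi> i. pd i F x)"
  have K_sym: "transpose K = K"
    unfolding K_def using symmetric_matrix_inv[OF H symmetric_hess[OF x]] .
  have "K *v g = - x"
  proof -
    have "K *v (hess F x *v x) = x"
      using H by (simp add: K_def matrix_vector_mul_assoc matrix_inv_left)
    then have "- (K *v g) = x"
      using euler_hess[OF x] by (simp add: g_def matrix_vector_mult_diff_distrib[of K 0, simplified])
    then show ?thesis
      by (metis minus_minus)
  qed
  have "(\<Sum>m\<in>UNIV. nablaG F x a b $ m * pd m F x) = nablaG F x a b \<bullet> g"
    by (simp add: g_def inner_vec_def)
  also have "\<dots> = (pd a (hess F) x $ b \<bullet> (K *v g)) / 2"
    using symmetric_inner_matrix[OF K_sym] by (simp add: nablaG_hess[OF x H] K_def[symmetric])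
  also have "\<dots> = - ((pd a (hess F) x *v x) $ b) / 2"
    unfolding \<open>K *v g = - x\<close> by (simp add: matrix_vector_mul_component)
  also have "\<dots> = pd a (pd b F) x"
    using x by (simp add: euler_pd_hess hess_def)
  finally show ?thesis .
qed

lemma dirderiv_qPhi_plus_nablaG_Yukawa:
  assumes x: "x \<in> U" and H: "invertible (hess F x)"
  defines "K \<equiv> matrix_inv (hess F x)"
  shows "dirderiv (qPhi F) x (nablaG F x a b)
      + (2 * exp (- F x / 3)) *\<^sub>R (\<chi> k l. nablaG_Yukawa F x a b k l)
    = exp (- F x / 3) *\<^sub>R (pd a (pd b (hess F)) x - (pd a (pd b F) x / 3) *\<^sub>R hess F x
      - (1/2) *\<^sub>R (pd a (hess F) x ** K ** pd b (hess F) x + pd b (hess F) x ** K ** pd a (hess F) x))"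
proof -
  define w where "w = nablaG F x a b"
  have "dirderiv (qPhi F) x w = (\<Sum>m\<in>UNIV. w$m *\<^sub>R (exp (- F x / 3) *\<^sub>R
      (pd m (hess F) x - (pd m F x / 3) *\<^sub>R hess F x)))"
    unfolding dirderiv_eq_sum_pd[OF qPhi_differentiable[OF x]] pd_qPhi[OF x] ..
  also have "\<dots> = exp (- F x / 3) *\<^sub>R ((\<Sum>m\<in>UNIV. w$m *\<^sub>R pd m (hess F) x)
      - ((\<Sum>m\<in>UNIV. w$m * pd m F x) / 3) *\<^sub>R hess F x)"
    by (simp add: scaleR_sum_right sum_subtractf scaleR_sum_left sum_divide_distrib algebra_simps)
  also have "\<dots> = exp (- F x / 3) *\<^sub>R ((\<Sum>m\<in>UNIV. w$m *\<^sub>R pd m (hess F) x)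
      - (pd a (pd b F) x / 3) *\<^sub>R hess F x)"
    unfolding w_def inner_nablaG_grad[OF x H] ..
  finally have D: "dirderiv (qPhi F) x (nablaG F x a b) = exp (- F x / 3) *\<^sub>R
      ((\<Sum>m\<in>UNIV. nablaG F x a b $ m *\<^sub>R pd m (hess F) x) - (pd a (pd b F) x / 3) *\<^sub>R hess F x)"
    unfolding w_def .
  show ?thesis
    unfolding D K_def by (simp add: vec_eq_iff nablaG_Yukawa_eq[OF x H] field_simps)
qed

end

lemma smooth_on_potF:
  assumes "open U" "\<And>y. y \<in> U \<Longrightarrow> Vol y > 0" "smooth_on U Vol"
  shows "smooth_on U (potF Vol)"
proof -
  have "smooth_on U (\<lambda>y. (- 3) * ln (Vol y))"
    using assms by (intro smooth_on_mult smooth_on_const smooth_on_ln)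
  then show ?thesis
    by (simp add: potF_def[abs_def])
qed

lemma euler_potF:
  assumes Vol: "Vol y > 0" "Vol differentiable (at y)"
    and homogeneous: "\<And>t. t > 0 \<Longrightarrow> Vol (t *\<^sub>R y) = t powr r * Vol y"
  shows "(\<Sum>m\<in>UNIV. y$m * pd m (potF Vol) y) = - 3 * r"
proof -
  have line: "potF Vol (y + t *\<^sub>R y) = potF Vol y - 3 * r * ln (1 + t)" if "t \<in> {-1<..<1}" for t
  proof -
    have "y + t *\<^sub>R y = (1 + t) *\<^sub>R y"
      by (simp add: algebra_simps)
    then show ?thesis
      using homogeneous[of "1 + t"] that Vol(1) by (simp add: potF_def ln_mult ln_powr algebra_simps)
  qed
  have "((\<lambda>t. potF Vol y - 3 * r * ln (1 + t)) has_real_derivative - 3 * r) (at 0)"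
    by (auto intro!: derivative_eq_intros)
  then have "((\<lambda>t. potF Vol (y + t *\<^sub>R y)) has_real_derivative - 3 * r) (at 0)"
    by (rule has_field_derivative_transform_within_open[where S = "{-1<..<1}"]) (simp_all add: line)
  then have "dirderiv (potF Vol) y y = - 3 * r"
    unfolding dirderiv_def
    by (intro vector_derivative_at) (simp add: has_real_derivative_iff_has_vector_derivative)
  moreover have "potF Vol differentiable (at y)"
  proof -
    have "ln differentiable (at (Vol y))"
      using DERIV_ln[OF Vol(1)] real_differentiable_def differentiableI by blast
    then show ?thesis
      unfolding potF_def[abs_def] using Vol(2)
      by (intro differentiable_mult differentiable_const differentiable_compose[of ln Vol])
  qed
  ultimately show ?thesis
    by (simp add: dirderiv_eq_sum_pd)
qed

theorem mainTheorem18: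
  fixes Vol :: "real^'n::finite \<Rightarrow> real" and U :: "(real^'n) set"
  assumes U_open: "open U"
    and U_cone: "\<And>x t. x \<in> U \<Longrightarrow> t > 0 \<Longrightarrow> t *\<^sub>R x \<in> U"
    and Vol_pos: "\<And>x. x \<in> U \<Longrightarrow> Vol x > 0"
    and Vol_smooth: "smooth_on U Vol"
    and Vol_homog: "\<And>x t. x \<in> U \<Longrightarrow> t > 0 \<Longrightarrow> Vol (t *\<^sub>R x) = t powr (7/3) * Vol x"
    and G_posdef: "\<And>x v. x \<in> U \<Longrightarrow> v \<noteq> 0 \<Longrightarrow> Gmet (potF Vol) x v v > 0"
    and x_in: "x \<in> U"
  shows "pullback_LC Sym2 gS2 (qPhi (potF Vol)) (pd b (qPhi (potF Vol))) a x
     = dirderiv (qPhi (potF Vol)) x (nablaG (potF Vol) x a b)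
       + (2 * exp (- potF Vol x / 3)) *\<^sub>R (\<chi> k l. nablaG_Yukawa (potF Vol) x a b k l)"
proof -
  interpret log_homogeneous_potential U "potF Vol" "- 7"
  proof
    show "open U" "smooth_on U (potF Vol)"
      using smooth_on_potF[OF U_open Vol_pos Vol_smooth] U_open by simp_all
    show "(\<Sum>m\<in>UNIV. y$m * pd m (potF Vol) y) = - 7" if "y \<in> U" for y
      using euler_potF[OF Vol_pos[OF that] smooth_on_imp_differentiable[OF Vol_smooth that]
          Vol_homog[OF that]] by simp
  qed
  have H: "invertible (hess (potF Vol) x)"
    using G_posdef[OF x_in] by (rule invertible_hess_if_positive_definite)
  show ?thesis
    unfolding pullback_LC_qPhi[OF x_in H] dirderiv_qPhi_plus_nablaG_Yukawa[OF x_in H] ..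
qed

end
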